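(* Let $\mathcal T$ be $\Lambda$-admissible. For all $E\in\mathcal T$, $$\sum_{\boldsymbol x\in\mathcal H_E}d^2(v,\boldsymbol x)\lesssim|v-\mathcal I_Ev|^2_{1,E}\lesssim\sum_{\boldsymbol x\in\mathcal H_E}d^2(v,\boldsymbol x)\qquad\forall v\in\mathbb V_E,$$ with hidden constants depending only on $\Lambda$ (and on $\mathcal T_0$, $c_s$, $C_s$), not on $E$ or $\mathcal T$.
   Context: Setting. $\Omega\subset\mathbb R^2$ polygonal, $\mathcal T_0$ a fixed conforming triangulation; $\mathcal T$ is obtained by finitely many newest-vertex bisections (possibly with hanging nodes). Nodes are vertices of triangles of $\mathcal T$; a hanging node $\boldsymbol z$ was created as the midpoint of an edge of a triangle of an earlier partition, whose endpoints are denoted $\boldsymbol z',\boldsymbol z''$. Global index: $0$ at proper nodes (vertices of all triangles containing them), $\max(\lambda(\boldsymbol z'),\lambda(\boldsymbol z''))+1$ at hanging nodes; $\Lambda$-admissible means all indices $\le\Lambda$. For $E\in\mathcal T$: $\mathcal N_E$ = nodes on $\partial E$, $\mathcal V_E$ = the three vertices of $E$, $\mathcal H_E=\mathcal N_E\setminus\mathcal V_E$. $\mathbb V_E\subset C^0(\overline E)\cap H^1(E)$: dimension $|\mathcal N_E|$, contains $\mathbb P_1(E)$, traces exactly the continuous functions on $\partial E$ affine between consecutive nodes of $\mathcal N_E$. Stability assumption: with $s_E(v,w)=\sum_{\boldsymbol x\in\mathcal N_E}v(\boldsymbol x)w(\boldsymbol x)$, $c_s|w|^2_{1,E}\le s_E(w,w)\le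 C_s|w|^2_{1,E}$ for all $w\in\mathbb V_E$ vanishing at $\mathcal V_E$. $\mathcal I_E$: Lagrange interpolation into $\mathbb P_1(E)$ at $\mathcal V_E$. Hierarchical details: $d(v,\boldsymbol z)=v(\boldsymbol z)$ for $\boldsymbol z\in\mathcal V_E$, and $d(v,\boldsymbol z)=v(\boldsymbol z)-\frac12(v(\boldsymbol z')+v(\boldsymbol z''))$ for $\boldsymbol z\in\mathcal H_E$. *)

theory Defs
  imports "HOL-Analysis.Analysis"
begin

type_synonym point = "real^2"

text \<open>A labelled triangle (p, q, r): r is the newest vertex, [p,q] the refinement edge.\<close>
type_synonym tri = "point \<times> point \<times> point"

definition verts :: "tri \<Rightarrow> point set" where
  "verts K = (case K of (p, q, r) \<Rightarrow> {p, q, r})"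

definition tri_hull :: "tri \<Rightarrow> point set" where
  "tri_hull K = convex hull (verts K)"

definition ref_mid :: "tri \<Rightarrow> point" where
  "ref_mid K = (case K of (p, q, r) \<Rightarrow> midpoint p q)"

definition bisect :: "tri \<Rightarrow> tri set" where
  "bisect K = (case K of (p, q, r) \<Rightarrow> {(r, p, midpoint p q), (q, r, midpoint p q)})"

definition ref_edge :: "tri \<Rightarrow> point \<times> point" where
  "ref_edge K = (case K of (p, q, r) \<Rightarrow> (p, q))"

definition initial_triangulation :: "tri set \<Rightarrow> bool" where
  "initial_triangulation T0 \<longleftrightarrow> finite T0 \<and> T0 \<noteq> {} \<and>
     (\<forall>K\<in>T0. \<not> collinear (verts K) \<and> card (verts K) = 3) \<and>
     (\<forall>K\<in>T0. \<forall>K'\<in>T0. K \<noteq> K' \<longrightarrow> verts K \<noteq> verts K' \<and>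
          tri_hull K \<inter> tri_hull K' = convex hull (verts K \<inter> verts K'))"

definition nodes :: "tri set \<Rightarrow> point set" where
  "nodes T = (\<Union>K\<in>T. verts K)"

text \<open>Partitions obtained from T0 by finitely many newest-vertex bisections (hanging nodes
  allowed), together with the parent map: when a new node z is created as the midpoint of
  the refinement edge [z',z''], we record par z = Some (z',z'').\<close>
inductive nvb_reach :: "tri set \<Rightarrow> tri set \<Rightarrow> (point \<Rightarrow> (point \<times> point) option) \<Rightarrow> bool"
  for T0 :: "tri set" where
  init: "nvb_reach T0 T0 (\<lambda>_. None)"
| step: "nvb_reach T0 T par \<Longrightarrow> K \<in> T \<Longrightarrow>
     nvb_reach T0 ((T - {K}) \<union> bisect K)
       (if ref_mid K \<in> nodes T then par else par(ref_mid K := Some (ref_edge K)))"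

definition proper_node :: "tri set \<Rightarrow> point \<Rightarrow> bool" where
  "proper_node T z \<longleftrightarrow> (\<forall>K\<in>T. z \<in> tri_hull K \<longrightarrow> z \<in> verts K)"

text \<open>idx_le T par k z  means: the global index of z is at most k.\<close>
inductive idx_le :: "tri set \<Rightarrow> (point \<Rightarrow> (point \<times> point) option) \<Rightarrow> nat \<Rightarrow> point \<Rightarrow> bool"
  for T par where
  proper: "proper_node T z \<Longrightarrow> idx_le T par k z"
| hanging: "\<not> proper_node T z \<Longrightarrow> par z = Some (z', z'') \<Longrightarrow>
     idx_le T par k z' \<Longrightarrow> idx_le T par k z'' \<Longrightarrow> idx_le T par (Suc k) z"

definition admissible :: "nat \<Rightarrow> tri set \<Rightarrow> (point \<Rightarrow> (point \<times> point) option) \<Rightarrow> bool" where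
  "admissible \<Lambda> T par \<longleftrightarrow> (\<forall>z\<in>nodes T. idx_le T par \<Lambda> z)"

definition elem_nodes :: "tri set \<Rightarrow> tri \<Rightarrow> point set" where
  "elem_nodes T E = nodes T \<inter> frontier (tri_hull E)"

definition hang_nodes :: "tri set \<Rightarrow> tri \<Rightarrow> point set" where
  "hang_nodes T E = elem_nodes T E - verts E"

text \<open>Convention: a function on the closed triangle is identified with its extension by 0.\<close>
definition restr :: "tri \<Rightarrow> (point \<Rightarrow> real) \<Rightarrow> point \<Rightarrow> real" where
  "restr E f = (\<lambda>x. if x \<in> tri_hull E then f x else 0)"

definition affine_fun :: "(point \<Rightarrow> real) \<Rightarrow> bool" where
  "affine_fun f \<longleftrightarrow> (\<exists>a b. \<forall>x. f x = inner a x + b)"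

definition P1 :: "tri \<Rightarrow> (point \<Rightarrow> real) set" where
  "P1 E = {restr E f | f. affine_fun f}"

definition interp :: "tri \<Rightarrow> (point \<Rightarrow> real) \<Rightarrow> point \<Rightarrow> real" where
  "interp E v = restr E (THE f. affine_fun f \<and> (\<forall>x\<in>verts E. f x = v x))"

definition detail :: "(point \<Rightarrow> (point \<times> point) option) \<Rightarrow> tri \<Rightarrow> (point \<Rightarrow> real) \<Rightarrow> point \<Rightarrow> real" where
  "detail par E v z = (if z \<in> verts E then v z else
     (case par z of Some (z', z'') \<Rightarrow> v z - (v z' + v z'') / 2 | None \<Rightarrow> v z))"

definition pderiv :: "2 \<Rightarrow> (point \<Rightarrow> real) \<Rightarrow> point \<Rightarrow> real" where
  "pderiv i \<phi> x = frechet_derivative \<phi> (at x) (axis i 1)"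

coinductive smooth_fun :: "(point \<Rightarrow> real) \<Rightarrow> bool" where
  "(\<forall>x. \<phi> differentiable (at x)) \<Longrightarrow> (\<forall>i::2. smooth_fun (pderiv i \<phi>)) \<Longrightarrow> smooth_fun \<phi>"

definition test_fun :: "point set \<Rightarrow> (point \<Rightarrow> real) \<Rightarrow> bool" where
  "test_fun U \<phi> \<longleftrightarrow> smooth_fun \<phi> \<and> compact (closure {x. \<phi> x \<noteq> 0})
      \<and> closure {x. \<phi> x \<noteq> 0} \<subseteq> U"

definition weak_grad :: "point set \<Rightarrow> (point \<Rightarrow> real) \<Rightarrow> (point \<Rightarrow> real^2) \<Rightarrow> bool" where
  "weak_grad U w g \<longleftrightarrow>
     set_borel_measurable lborel U w \<and> set_integrable lborel U (\<lambda>x. (w x)^2) \<and>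
     (\<forall>i::2. set_borel_measurable lborel U (\<lambda>x. g x $ i) \<and>
                 set_integrable lborel U (\<lambda>x. (g x $ i)^2)) \<and>
     (\<forall>\<phi> (i::2). test_fun U \<phi> \<longrightarrow>
        set_integrable lborel U (\<lambda>x. w x * pderiv i \<phi> x) \<and>
        set_integrable lborel U (\<lambda>x. g x $ i * \<phi> x) \<and>
        (LINT x:U|lborel. w x * pderiv i \<phi> x) = - (LINT x:U|lborel. g x $ i * \<phi> x))"

definition H1 :: "point set \<Rightarrow> (point \<Rightarrow> real) \<Rightarrow> bool" where
  "H1 U w \<longleftrightarrow> (\<exists>g. weak_grad U w g)"

definition h1_semi_sq :: "tri \<Rightarrow> (point \<Rightarrow> real) \<Rightarrow> real" where
  "h1_semi_sq E w = (THE s. \<exists>g. weak_grad (interior (tri_hull E)) w g \<and>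
      s = (LINT x:interior (tri_hull E)|lborel. (norm (g x))^2))"

definition consec :: "tri set \<Rightarrow> tri \<Rightarrow> point \<Rightarrow> point \<Rightarrow> bool" where
  "consec T E a b \<longleftrightarrow> a \<in> elem_nodes T E \<and> b \<in> elem_nodes T E \<and> a \<noteq> b \<and>
     closed_segment a b \<subseteq> frontier (tri_hull E) \<and> open_segment a b \<inter> elem_nodes T E = {}"

definition pw_affine_bdry :: "tri set \<Rightarrow> tri \<Rightarrow> (point \<Rightarrow> real) \<Rightarrow> bool" where
  "pw_affine_bdry T E g \<longleftrightarrow> continuous_on (frontier (tri_hull E)) g \<and>
     (\<forall>a b. consec T E a b \<longrightarrow>
        (\<forall>t\<in>{0..1}. g ((1 - t) *\<^sub>R a + t *\<^sub>R b) = (1 - t) * g a + t * g b))"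

definition VE_space :: "tri set \<Rightarrow> tri \<Rightarrow> (point \<Rightarrow> real) set \<Rightarrow> bool" where
  "VE_space T E V \<longleftrightarrow>
     (\<forall>v\<in>V. \<forall>x. x \<notin> tri_hull E \<longrightarrow> v x = 0) \<and>
     (\<forall>v\<in>V. \<forall>w\<in>V. (\<lambda>x. v x + w x) \<in> V) \<and>
     (\<forall>v\<in>V. \<forall>c::real. (\<lambda>x. c * v x) \<in> V) \<and>
     (\<lambda>x. 0) \<in> V \<and>
     (\<forall>v\<in>V. continuous_on (tri_hull E) v \<and> H1 (interior (tri_hull E)) v) \<and>
     (\<exists>B. finite B \<and> B \<subseteq> V \<and> card B = card (elem_nodes T E) \<and>
        (\<forall>c. (\<forall>x. (\<Sum>b\<in>B. c b * b x) = 0) \<longrightarrow> (\<forall>b\<in>B. c b = 0)) \<and>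
        (\<forall>v\<in>V. \<exists>c. \<forall>x. v x = (\<Sum>b\<in>B. c b * b x))) \<and>
     P1 E \<subseteq> V \<and>
     (\<forall>v\<in>V. pw_affine_bdry T E v) \<and>
     (\<forall>g. pw_affine_bdry T E g \<longrightarrow> (\<exists>v\<in>V. \<forall>x\<in>frontier (tri_hull E). v x = g x))"

definition stab_form :: "tri set \<Rightarrow> tri \<Rightarrow> (point \<Rightarrow> real) \<Rightarrow> (point \<Rightarrow> real) \<Rightarrow> real" where
  "stab_form T E v w = (\<Sum>x\<in>elem_nodes T E. v x * w x)"

definition stability_assm :: "real \<Rightarrow> real \<Rightarrow> tri set \<Rightarrow> tri \<Rightarrow> (point \<Rightarrow> real) set \<Rightarrow> bool" where
  "stability_assm cs Cs T E V \<longleftrightarrow> (\<forall>w\<in>V. (\<forall>x\<in>verts E. w x = 0) \<longrightarrow>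
      cs * h1_semi_sq E w \<le> stab_form T E w w \<and> stab_form T E w w \<le> Cs * h1_semi_sq E w)"

end

theory Submission
  imports Defs
begin

text \<open>Newest-vertex bisection keeps the nodes on every edge of an element a dyadic subdivision of
  that edge, in which each node inside the edge is the midpoint of its two parents, and these are
  adjacent points of the subdivision. Hence the parents of a hanging node of E lie on the boundary
  of E again, and by induction on the global index the hanging nodes of a \<open>\<Lambda>\<close>-admissible
  partition are iterated midpoints of depth at most \<open>\<Lambda>\<close> of the vertices of E, so their
  number is bounded in terms of \<open>\<Lambda>\<close> alone.

  The error w = v - I v lies in V_E and vanishes at the vertices, so by the stability assumption
  its squared seminorm is equivalent to the sum of the squares of w over the hanging nodes. As
  I v is affine, the detail at a hanging node z is w z - (w z' + w z'') / 2; this bounds each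
  detail by the values of w, and conversely |w z| is at most the index of z times the largest
  detail.\<close>

section \<open>Planar geometry\<close>

definition cross2 :: "point \<Rightarrow> point \<Rightarrow> real" where
  "cross2 u w = u$1 * w$2 - u$2 * w$1"

lemma cross2_simps:
  "cross2 (u + v) w = cross2 u w + cross2 v w"
  "cross2 u (v + w) = cross2 u v + cross2 u w"
  "cross2 (u - v) w = cross2 u w - cross2 v w"
  "cross2 u (v - w) = cross2 u v - cross2 u w"
  "cross2 (c *\<^sub>R u) w = c * cross2 u w"
  "cross2 u (c *\<^sub>R w) = c * cross2 u w"
  "cross2 u u = 0"
  by (auto simp: cross2_def algebra_simps)

lemma cross2_commute: "cross2 w u = - cross2 u w"
  by (simp add: cross2_def)

lemma inner_vec2: "(u::real^2) \<bullet> w = u$1 * w$1 + u$2 * w$2"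
  by (simp add: inner_vec_def sum_2)

lemma vec2_eq_iff: "(u::real^2) = w \<longleftrightarrow> u$1 = w$1 \<and> u$2 = w$2"
  by (simp add: vec_eq_iff forall_2)

lemma cross2_eq_0_imp_parallel:
  fixes u w :: point
  assumes "cross2 u w = 0" and "w \<noteq> 0"
  shows "u = ((u \<bullet> w) / (w \<bullet> w)) *\<^sub>R w"
proof -
  have "(w$1*w$1 + w$2*w$2) * u$1 = (u$1*w$1 + u$2*w$2) * w$1 + w$2 * (u$1 * w$2 - u$2 * w$1)"
    and "(w$1*w$1 + w$2*w$2) * u$2 = (u$1*w$1 + u$2*w$2) * w$2 - w$1 * (u$1 * w$2 - u$2 * w$1)"
    by (simp_all add: algebra_simps)
  then have e: "(w \<bullet> w) *\<^sub>R u = (u \<bullet> w) *\<^sub>R w"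
    using assms(1) by (simp add: vec2_eq_iff inner_vec2 cross2_def)
  have "w \<bullet> w \<noteq> 0" using assms(2) by simp
  then have "u = inverse (w \<bullet> w) *\<^sub>R ((w \<bullet> w) *\<^sub>R u)" by simp
  also have "\<dots> = ((u \<bullet> w) / (w \<bullet> w)) *\<^sub>R w" using e by (simp add: field_simps)
  finally show ?thesis .
qed

lemma orthogonal_vec2_imp_cross2_eq_0:
  fixes n u w :: point
  assumes "n \<noteq> 0" and "n \<bullet> u = 0" and "n \<bullet> w = 0"
  shows "cross2 u w = 0"
proof (cases "n$1 = 0")
  case True
  then have "n$2 \<noteq> 0" using assms(1) by (simp add: vec2_eq_iff)
  then show ?thesis using assms(2,3) True by (simp add: inner_vec2 cross2_def)
next
  case False
  have "n$1 * (u$1 * w$2 - u$2 * w$1) = (n \<bullet> u) * w$2 - (n \<bullet> w) * u$2"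
    by (simp add: inner_vec2 algebra_simps)
  then show ?thesis using assms(2,3) False by (simp add: cross2_def)
qed

lemma collinear_3_iff_cross2:
  fixes p q r :: point
  shows "collinear {p, q, r} \<longleftrightarrow> cross2 (q - p) (r - p) = 0"
proof
  assume "collinear {p, q, r}"
  then have "collinear {q, r, p}" by (simp add: insert_commute)
  then have "q = p \<or> (\<exists>u. r = u *\<^sub>R q + (1 - u) *\<^sub>R p)"
    by (simp add: collinear_3_expand)
  then show "cross2 (q - p) (r - p) = 0"
  proof
    assume "\<exists>u. r = u *\<^sub>R q + (1 - u) *\<^sub>R p"
    then obtain u where "r - p = u *\<^sub>R (q - p)" by (auto simp: algebra_simps)
    then show ?thesis by (simp add: cross2_simps)
  qed (simp add: cross2_def)
next
  assume c: "cross2 (q - p) (r - p) = 0"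
  show "collinear {p, q, r}"
  proof (cases "q = p")
    case False
    define t where "t = ((r - p) \<bullet> (q - p)) / ((q - p) \<bullet> (q - p))"
    have "r - p = t *\<^sub>R (q - p)"
      using cross2_eq_0_imp_parallel[of "r - p" "q - p"] c False cross2_commute[of "q - p" "r - p"]
      unfolding t_def by simp
    then have "r = t *\<^sub>R q + (1 - t) *\<^sub>R p" by (simp add: algebra_simps)
    then have "collinear {q, r, p}" unfolding collinear_3_expand by blast
    then show ?thesis by (simp add: insert_commute)
  qed (simp add: collinear_2)
qed

lemma convex_comb3_minus_first:
  fixes p q r :: point
  assumes "a + b + c = 1"
  shows "a *\<^sub>R p + b *\<^sub>R q + c *\<^sub>R r - p = b *\<^sub>R (q - p) + c *\<^sub>R (r - p)"
proof -
  have "a = 1 - b - c" using assms by simp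
  then have "a *\<^sub>R p = p - b *\<^sub>R p - c *\<^sub>R p" by (simp add: scaleR_diff_left)
  then show ?thesis by (simp add: algebra_simps)
qed

lemma interior_triangle:
  assumes "\<not> collinear {p, q, r::point}"
  shows "interior (convex hull {p, q, r}) =
     {v. \<exists>x y z. 0 < x \<and> 0 < y \<and> 0 < z \<and> x + y + z = 1 \<and> x *\<^sub>R p + y *\<^sub>R q + z *\<^sub>R r = v}"
  using interior_convex_hull_3_minimal[OF assms] by simp

lemma closed_segment_disjoint_interior_triangle:
  assumes nc: "\<not> collinear {p, q, r::point}" and x: "x \<in> closed_segment p q"
  shows "x \<notin> interior (convex hull {p, q, r})"
proof
  assume "x \<in> interior (convex hull {p, q, r})"
  then obtain a b c where abc: "0 < b" "0 < c" "a + b + c = 1" "x = a *\<^sub>R p + b *\<^sub>R q + c *\<^sub>R r"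
    using interior_triangle[OF nc] by auto
  then have "cross2 (q - p) (x - p) = c * cross2 (q - p) (r - p)"
    using convex_comb3_minus_first[OF abc(3)] by (simp add: cross2_simps)
  moreover obtain t where "x = (1 - t) *\<^sub>R p + t *\<^sub>R q" using x by (auto simp: in_segment)
  then have "x - p = t *\<^sub>R (q - p)" by (simp add: algebra_simps)
  then have "cross2 (q - p) (x - p) = 0" by (simp add: cross2_simps)
  ultimately show False using abc nc by (simp add: collinear_3_iff_cross2)
qed

lemma interior_triangle_nonempty:
  assumes "\<not> collinear {p, q, r::point}"
  shows "interior (convex hull {p, q, r}) \<noteq> {}"
proof -
  have "(1/3) *\<^sub>R p + (1/3) *\<^sub>R q + (1/3) *\<^sub>R r \<in> interior (convex hull {p, q, r})"
    unfolding interior_triangle[OF assms] by (intro CollectI exI[of _ "1/3"]) simp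
  then show ?thesis by blast
qed

lemma closed_convex_hull_3: "closed (convex hull {p, q, r::point})"
  by (simp add: compact_imp_closed finite_imp_compact_convex_hull)

lemma closure_interior_triangle:
  assumes "\<not> collinear {p, q, r::point}"
  shows "closure (interior (convex hull {p, q, r})) = convex hull {p, q, r}"
  using convex_closure_interior[OF convex_convex_hull interior_triangle_nonempty[OF assms]]
    closed_convex_hull_3 by (simp add: closure_closed)

lemma closed_segment_subset_convex_hull:
  "a \<in> S \<Longrightarrow> b \<in> S \<Longrightarrow> closed_segment a b \<subseteq> convex hull S"
  by (simp add: segment_convex_hull hull_mono)

lemma edge_subset_frontier_triangle:
  assumes nc: "\<not> collinear {p, q, r::point}" and "a \<in> {p, q, r}" "b \<in> {p, q, r}" "a \<noteq> b"
  shows "closed_segment a b \<subseteq> frontier (convex hull {p, q, r})"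
proof -
  obtain c where c: "{p, q, r} = {a, b, c}" using assms(2-4) by auto
  have "closed_segment a b \<subseteq> convex hull {a, b, c}"
    by (rule closed_segment_subset_convex_hull) auto
  then show ?thesis
    using nc closed_segment_disjoint_interior_triangle[of a b c] closed_convex_hull_3[of a b c]
    unfolding c by (auto simp: frontier_def closure_closed)
qed

lemma triangle_distinct:
  assumes "\<not> collinear {p, q, r::point}"
  shows "p \<noteq> q" "q \<noteq> r" "p \<noteq> r"
  using assms by (auto simp: collinear_2 insert_commute)

lemma vertex_not_interior_triangle:
  assumes nc: "\<not> collinear {p, q, r::point}" and a: "a \<in> {p, q, r}"
  shows "a \<notin> interior (convex hull {p, q, r})"
proof -
  obtain b where "b \<in> {p, q, r}" "b \<noteq> a" using a triangle_distinct[OF nc] by blast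
  then show ?thesis using edge_subset_frontier_triangle[OF nc a] by (auto simp: frontier_def)
qed

lemma frontier_triangle_not_vertex:
  assumes nc: "\<not> collinear {p, q, r::point}" and z: "z \<in> frontier (convex hull {p, q, r})"
    and zv: "z \<notin> {p, q, r}"
  shows "z \<in> open_segment p q \<or> z \<in> open_segment q r \<or> z \<in> open_segment r p"
proof -
  have "z \<in> convex hull {p, q, r}" using z closed_convex_hull_3 by (simp add: frontier_def closure_closed)
  then obtain u v w where uvw: "0 \<le> u" "0 \<le> v" "0 \<le> w" "u + v + w = 1" "z = u *\<^sub>R p + v *\<^sub>R q + w *\<^sub>R r"
    by (auto simp: convex_hull_3)
  have "z \<notin> interior (convex hull {p, q, r})" using z by (simp add: frontier_def)
  then have "\<not> (0 < u \<and> 0 < v \<and> 0 < w)" using uvw unfolding interior_triangle[OF nc] by blast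
  then consider "u = 0" | "v = 0" | "w = 0" using uvw by linarith
  then have "z \<in> closed_segment q r \<or> z \<in> closed_segment r p \<or> z \<in> closed_segment p q"
  proof cases
    case 1
    then show ?thesis using uvw by (auto simp: in_segment intro!: exI[of _ w])
  next
    case 2
    then show ?thesis using uvw by (auto simp: in_segment intro!: exI[of _ u])
  next
    case 3
    then show ?thesis using uvw by (auto simp: in_segment intro!: exI[of _ v])
  qed
  then show ?thesis using zv by (auto simp: open_segment_def)
qed

lemma median_subset_interior_triangle:
  assumes nc: "\<not> collinear {p, q, r::point}"
  shows "open_segment r (midpoint p q) \<subseteq> interior (convex hull {p, q, r})"
proof
  fix x assume "x \<in> open_segment r (midpoint p q)"
  then obtain t where t: "0 < t" "t < 1" "x = (1 - t) *\<^sub>R r + t *\<^sub>R midpoint p q"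
    by (auto simp: in_segment)
  then have "x = (t/2) *\<^sub>R p + (t/2) *\<^sub>R q + (1 - t) *\<^sub>R r"
    by (simp add: midpoint_def algebra_simps)
  then show "x \<in> interior (convex hull {p, q, r})"
    unfolding interior_triangle[OF nc] using t by (intro CollectI exI[of _ "t/2"] exI[of _ "1-t"]) auto
qed

lemma separating_line_triangles:
  assumes nc: "\<not> collinear {p, q, r::point}" and nc': "\<not> collinear {p', q', r'::point}"
    and disj: "interior (convex hull {p, q, r}) \<inter> interior (convex hull {p', q', r'}) = {}"
  obtains n \<beta> where "n \<noteq> 0" "\<forall>x\<in>convex hull {p, q, r}. n \<bullet> x \<le> \<beta>"
    "\<forall>x\<in>convex hull {p', q', r'}. \<beta> \<le> n \<bullet> x"
proof -
  obtain n \<beta> where nb: "n \<noteq> 0" "\<forall>x\<in>interior (convex hull {p, q, r}). n \<bullet> x \<le> \<beta>"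
      "\<forall>x\<in>interior (convex hull {p', q', r'}). n \<bullet> x \<ge> \<beta>"
    using separating_hyperplane_sets[OF convex_interior[OF convex_convex_hull]
        convex_interior[OF convex_convex_hull] interior_triangle_nonempty[OF nc]
        interior_triangle_nonempty[OF nc'] disj] by blast
  have "closure (interior (convex hull {p, q, r})) \<subseteq> {x. n \<bullet> x \<le> \<beta>}"
    using nb(2) by (intro closure_minimal) (auto simp: closed_halfspace_le)
  moreover have "closure (interior (convex hull {p', q', r'})) \<subseteq> {x. n \<bullet> x \<ge> \<beta>}"
    using nb(3) by (intro closure_minimal) (auto simp: closed_halfspace_ge)
  ultimately show ?thesis
    using nb(1) that unfolding closure_interior_triangle[OF nc] closure_interior_triangle[OF nc'] by blast
qed

lemma supporting_line_segment:
  fixes n :: point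
  assumes "n \<bullet> x \<le> \<beta>" "n \<bullet> y \<le> \<beta>" "z \<in> open_segment x y" "\<beta> \<le> n \<bullet> z"
  shows "n \<bullet> x = \<beta>" "n \<bullet> y = \<beta>"
proof -
  obtain u where u: "0 < u" "u < 1" "z = (1 - u) *\<^sub>R x + u *\<^sub>R y" using assms(3) by (auto simp: in_segment)
  then have "n \<bullet> z = (1 - u) * (n \<bullet> x) + u * (n \<bullet> y)" by (simp add: inner_add_right)
  then have "(1 - u) * (\<beta> - n \<bullet> x) + u * (\<beta> - n \<bullet> y) = \<beta> - n \<bullet> z"
    by (simp add: algebra_simps)
  moreover have "0 \<le> (1 - u) * (\<beta> - n \<bullet> x)" "0 \<le> u * (\<beta> - n \<bullet> y)" using u assms(1,2) by simp_all
  ultimately have "(1 - u) * (\<beta> - n \<bullet> x) = 0" "u * (\<beta> - n \<bullet> y) = 0" using assms(4) by linarith+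
  then show "n \<bullet> x = \<beta>" "n \<bullet> y = \<beta>" using u by simp_all
qed


section \<open>Dyadic subdivisions of a segment\<close>

definition dyadic_adj :: "real \<Rightarrow> real \<Rightarrow> bool" where
  "dyadic_adj s t \<longleftrightarrow> (\<exists>k j::nat. j < 2^k \<and> {s, t} = {real j / 2^k, real (j + 1) / 2^k})"

lemma dyadic_adj_sym: "dyadic_adj s t \<Longrightarrow> dyadic_adj t s"
  unfolding dyadic_adj_def by (auto simp: insert_commute)

lemma dyadic_adj_0_1: "dyadic_adj 0 1"
  unfolding dyadic_adj_def by (rule exI[of _ 0], rule exI[of _ 0]) auto

lemma dyadic_adjE:
  assumes "dyadic_adj s t"
  obtains k j :: nat where "j < 2^k"
    "s = real j / 2^k \<and> t = real (j + 1) / 2^k \<or> t = real j / 2^k \<and> s = real (j + 1) / 2^k"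
  using assms unfolding dyadic_adj_def by (auto simp: doubleton_eq_iff)

lemma dyadic_adjI:
  assumes "j < (2::nat)^k"
    "s = real j / 2^k \<and> t = real (j + 1) / 2^k \<or> t = real j / 2^k \<and> s = real (j + 1) / 2^k"
  shows "dyadic_adj s t"
  using assms unfolding dyadic_adj_def by (auto simp: doubleton_eq_iff)

lemma dyadic_adj_bounds:
  assumes "dyadic_adj s t"
  shows "0 \<le> s" "s \<le> 1" "0 \<le> t" "t \<le> 1" "s \<noteq> t"
proof -
  obtain k j :: nat where j: "j < 2^k"
    and st: "s = real j / 2^k \<and> t = real (j + 1) / 2^k \<or> t = real j / 2^k \<and> s = real (j + 1) / 2^k"
    using assms by (rule dyadic_adjE)
  have "j + 1 \<le> 2^k" using j by simp
  then have "real (j + 1) \<le> real (2^k)" by (simp only: of_nat_le_iff)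
  then have "real j / 2^k \<le> 1" "real (j + 1) / 2^k \<le> 1" using j by (simp_all add: divide_le_eq)
  moreover have "real j / 2^k \<noteq> real (j + 1) / 2^k" by (simp add: divide_cancel_right)
  ultimately show "0 \<le> s" "s \<le> 1" "0 \<le> t" "t \<le> 1" "s \<noteq> t" using st by auto
qed

lemma dyadic_adj_reflect: "dyadic_adj s t \<Longrightarrow> dyadic_adj (1 - s) (1 - t)"
proof (elim dyadic_adjE)
  fix k j :: nat assume j: "j < 2^k"
    and st: "s = real j / 2^k \<and> t = real (j + 1) / 2^k \<or> t = real j / 2^k \<and> s = real (j + 1) / 2^k"
  define j' where "j' = 2^k - 1 - j"
  have j': "j' < 2^k" unfolding j'_def using j by simp
  have "real (j' + 1 + j) = real (2^k)" unfolding j'_def using j by simp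
  then have jr: "real j' + 1 + real j = 2^k" by simp
  have "1 - real j / 2^k = real (j' + 1) / 2^k" "1 - real (j + 1) / 2^k = real j' / 2^k"
    using jr by (simp_all add: field_simps)
  then show "dyadic_adj (1 - s) (1 - t)" using st by (intro dyadic_adjI[OF j']) auto
qed

lemma dyadic_adj_midpoint: "dyadic_adj s t \<Longrightarrow> dyadic_adj s ((s + t) / 2)"
proof (elim dyadic_adjE)
  fix k j :: nat assume j: "j < 2^k"
    and st: "s = real j / 2^k \<and> t = real (j + 1) / 2^k \<or> t = real j / 2^k \<and> s = real (j + 1) / 2^k"
  then consider "s = real j / 2^k" "t = real (j + 1) / 2^k"
    | "t = real j / 2^k" "s = real (j + 1) / 2^k" by blast
  then show "dyadic_adj s ((s + t) / 2)"
  proof cases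
    case 1
    have "2 * j < 2^Suc k" using j by simp
    moreover have "s = real (2 * j) / 2^Suc k" "(s + t) / 2 = real (2 * j + 1) / 2^Suc k"
      unfolding 1 by (simp_all add: field_simps)
    ultimately show ?thesis using dyadic_adjI by blast
  next
    case 2
    have "2 * j + 1 < 2^Suc k" using j by simp
    moreover have "s = real (2 * j + 1 + 1) / 2^Suc k" "(s + t) / 2 = real (2 * j + 1) / 2^Suc k"
      unfolding 2 by (simp_all add: field_simps)
    ultimately show ?thesis using dyadic_adjI by blast
  qed
qed

text \<open>Only the level-0 pair straddles the midpoint of the unit interval: an odd power of two
  would be needed otherwise.\<close>

lemma dyadic_adj_straddle_half:
  assumes "dyadic_adj s t" "s < 1/2" "1/2 < t"
  shows "s = 0" "t = 1"
proof -
  obtain k j :: nat where j: "j < 2^k"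
    and st: "s = real j / 2^k \<and> t = real (j + 1) / 2^k \<or> t = real j / 2^k \<and> s = real (j + 1) / 2^k"
    using assms(1) by (rule dyadic_adjE)
  have "s < t" using assms(2,3) by simp
  then have st': "s = real j / 2^k" "t = real (j + 1) / 2^k"
    using st by (auto simp: divide_less_cancel)
  have "real (2 * j) < real (2^k)" using assms(2) st' by (simp add: field_simps)
  moreover have "real (2^k) < real (2 * j + 2)" using assms(3) st' by (simp add: field_simps)
  ultimately have e: "2^k = 2 * j + 1" by (simp only: of_nat_less_iff)
  have "k = 0"
  proof (rule ccontr)
    assume "k \<noteq> 0"
    then have "even ((2::nat)^k)" by simp
    with e show False by simp
  qed
  then show "s = 0" "t = 1" using e st' by simp_all
qed

lemma dyadic_adj_le_half:
  assumes "dyadic_adj s t" "(s + t) / 2 < 1/2"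
  shows "s \<le> 1/2" "t \<le> 1/2"
proof -
  obtain k j :: nat where j: "j < 2^k"
    and st: "s = real j / 2^k \<and> t = real (j + 1) / 2^k \<or> t = real j / 2^k \<and> s = real (j + 1) / 2^k"
    using assms(1) by (rule dyadic_adjE)
  have "s + t = (2 * real j + 1) / 2^k" using st by (auto simp: field_simps)
  moreover have "s + t < 1" using assms(2) by simp
  ultimately have "(2 * real j + 1) / 2^k < 1" by simp
  then have "real (2 * j + 1) < real (2^k)" by (simp add: divide_less_eq_1_pos)
  then have a: "2 * j + 1 < 2^k" by (simp only: of_nat_less_iff)
  then have "k \<noteq> 0" by (cases k) auto
  then have "even ((2::nat)^k)" by simp
  then have "2 * j + 2 \<le> 2^k" using a by presburger
  then have "real (2 * j + 2) \<le> real (2^k)" by (simp only: of_nat_le_iff)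
  then have "real (j + 1) / 2^k \<le> 1/2" by (simp add: field_simps)
  moreover have "real j / 2^k \<le> real (j + 1) / 2^k" by (simp add: divide_right_mono)
  ultimately show "s \<le> 1/2" "t \<le> 1/2" using st by auto
qed

lemma dyadic_adj_double:
  assumes "dyadic_adj s t" "s \<le> 1/2" "t \<le> 1/2"
  shows "dyadic_adj (2 * s) (2 * t)"
proof -
  obtain k j :: nat where j: "j < 2^k"
    and st: "s = real j / 2^k \<and> t = real (j + 1) / 2^k \<or> t = real j / 2^k \<and> s = real (j + 1) / 2^k"
    using assms(1) by (rule dyadic_adjE)
  have "real (j + 1) / 2^k \<le> 1/2" using st assms(2,3) by auto
  then have "real (2 * j + 2) \<le> real (2^k)" by (simp add: field_simps)
  then have a: "2 * j + 2 \<le> 2^k" by (simp only: of_nat_le_iff)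
  then obtain k' where k: "k = Suc k'" by (cases k) auto
  have "j < 2^k'" using a k by simp
  moreover have "2 * (real j / 2^k) = real j / 2^k'" "2 * (real (j + 1) / 2^k) = real (j + 1) / 2^k'"
    using k by (simp_all add: field_simps)
  ultimately show ?thesis using st by (intro dyadic_adjI) auto
qed

lemma linepath_alt: "linepath a b t = a + t *\<^sub>R (b - a)"
  by (simp add: linepath_def algebra_simps)

lemma linepath_eq_iff: "a \<noteq> b \<Longrightarrow> linepath a b s = linepath a b t \<longleftrightarrow> s = t"
  by (simp add: linepath_alt)

lemma linepath_altex_comb:
  "(1 - u) *\<^sub>R linepath a b s + u *\<^sub>R linepath a b t = linepath a b ((1 - u) * s + u * t)"
  by (simp add: linepath_alt algebra_simps)

lemma midpoint_linepath: "midpoint (linepath a b s) (linepath a b t) = linepath a b ((s + t) / 2)"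
  using linepath_altex_comb[of "1/2" a b s t] by (simp add: midpoint_def scaleR_add_right add_divide_distrib)

lemma linepath_reverse: "linepath b a (1 - s) = linepath a b s"
  by (simp add: linepath_def)

lemma linepath_linepath_start: "linepath a (linepath a b t) s = linepath a b (s * t)"
  by (simp add: linepath_alt algebra_simps)

lemma closed_segment_linepath:
  "closed_segment (linepath a b s) (linepath a b t) = linepath a b ` closed_segment s t"
proof -
  have "closed_segment (linepath a b s) (linepath a b t) =
      {(1 - u) *\<^sub>R linepath a b s + u *\<^sub>R linepath a b t |u. 0 \<le> u \<and> u \<le> 1}"
    by (simp add: closed_segment_def)
  also have "\<dots> = linepath a b ` {(1 - u) *\<^sub>R s + u *\<^sub>R t |u. 0 \<le> u \<and> u \<le> 1}"
    by (auto simp: linepath_altex_comb)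
  finally show ?thesis by (simp add: closed_segment_def)
qed

lemma open_segment_linepath:
  "a \<noteq> b \<Longrightarrow> open_segment (linepath a b s) (linepath a b t) = linepath a b ` open_segment s t"
  unfolding open_segment_def closed_segment_linepath using linepath_eq_iff by auto

lemma open_segment_linepath_image: "a \<noteq> b \<Longrightarrow> open_segment a b = linepath a b ` {0<..<1}"
  using open_segment_linepath[of a b 0 1] by (simp add: open_segment_eq_real_ivl linepath_0' linepath_1')

lemma midpoint_eq_linepath: "midpoint a b = linepath a b (1/2)"
  using midpoint_linepath[of a b 0 1] by (simp add: linepath_0' linepath_1')

lemma closed_segment_half_linepath:
  "closed_segment a (midpoint a b) = linepath a b ` {0..1/2}"
  using closed_segment_linepath[of a b 0 "1/2"]
  by (simp add: closed_segment_eq_real_ivl midpoint_eq_linepath linepath_0')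

lemma open_segment_half_linepath:
  "a \<noteq> b \<Longrightarrow> open_segment a (midpoint a b) = linepath a b ` {0<..<1/2}"
  using open_segment_linepath[of a b 0 "1/2"]
  by (simp add: open_segment_eq_real_ivl midpoint_eq_linepath linepath_0')

lemma open_segment_half_subset: "open_segment (a::point) (midpoint a b) \<subseteq> open_segment a b"
proof (cases "a = b")
  case False
  then show ?thesis
    unfolding open_segment_half_linepath[OF False] open_segment_linepath_image[OF False] by auto
qed simp

definition dyadic_adj_on :: "point \<Rightarrow> point \<Rightarrow> point \<Rightarrow> point \<Rightarrow> bool" where
  "dyadic_adj_on a b u v \<longleftrightarrow> (\<exists>s t. u = linepath a b s \<and> v = linepath a b t \<and> dyadic_adj s t)"

lemma dyadic_adj_on_ends: "dyadic_adj_on a b a b"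
  unfolding dyadic_adj_on_def using dyadic_adj_0_1
  by (intro exI[of _ 0] exI[of _ 1]) (simp add: linepath_0' linepath_1')

lemma dyadic_adj_on_sym: "dyadic_adj_on a b u v \<Longrightarrow> dyadic_adj_on a b v u"
  unfolding dyadic_adj_on_def using dyadic_adj_sym by blast

lemma dyadic_adj_on_reverse: "dyadic_adj_on a b u v \<Longrightarrow> dyadic_adj_on b a u v"
  unfolding dyadic_adj_on_def using dyadic_adj_reflect linepath_reverse by metis

lemma dyadic_adj_on_midpoint: "dyadic_adj_on a b u v \<Longrightarrow> dyadic_adj_on a b u (midpoint u v)"
  unfolding dyadic_adj_on_def using dyadic_adj_midpoint midpoint_linepath by metis

lemma dyadic_adj_on_closed_segment:
  "dyadic_adj_on a b u v \<Longrightarrow> u \<in> closed_segment a b \<and> v \<in> closed_segment a b"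
  unfolding dyadic_adj_on_def linepath_image_01[symmetric] using dyadic_adj_bounds by auto

lemma dyadic_adj_on_half:
  assumes ab: "a \<noteq> b" and d: "dyadic_adj_on a b u v"
    and "u \<in> closed_segment a (midpoint a b)" "v \<in> closed_segment a (midpoint a b)"
  shows "dyadic_adj_on a (midpoint a b) u v"
proof -
  obtain s t where st: "u = linepath a b s" "v = linepath a b t" "dyadic_adj s t"
    using d unfolding dyadic_adj_on_def by blast
  have "s \<le> 1/2" "t \<le> 1/2"
    using assms(3,4) st(1,2) linepath_eq_iff[OF ab] unfolding closed_segment_half_linepath by auto
  then have "dyadic_adj (2 * s) (2 * t)" using dyadic_adj_double st(3) by blast
  moreover have "u = linepath a (midpoint a b) (2 * s)" "v = linepath a (midpoint a b) (2 * t)"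
    using st by (simp_all add: midpoint_eq_linepath linepath_linepath_start)
  ultimately show ?thesis unfolding dyadic_adj_on_def by blast
qed

lemma dyadic_adj_on_half_midpoint:
  assumes ab: "a \<noteq> b" and d: "dyadic_adj_on a b u v"
    and m: "midpoint u v \<in> open_segment a (midpoint a b)"
  shows "dyadic_adj_on a (midpoint a b) u v"
proof -
  obtain s t where st: "u = linepath a b s" "v = linepath a b t" "dyadic_adj s t"
    using d unfolding dyadic_adj_on_def by blast
  have "midpoint u v = linepath a b ((s + t) / 2)" using st midpoint_linepath by simp
  then have "(s + t) / 2 < 1/2"
    using m linepath_eq_iff[OF ab] unfolding open_segment_half_linepath[OF ab] by auto
  then have "s \<le> 1/2" "t \<le> 1/2" using dyadic_adj_le_half st(3) by auto
  then have "u \<in> closed_segment a (midpoint a b)" "v \<in> closed_segment a (midpoint a b)"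
    using st dyadic_adj_bounds[OF st(3)] unfolding closed_segment_half_linepath by auto
  then show ?thesis using dyadic_adj_on_half[OF ab d] by blast
qed

lemma on_line_imp_linepath:
  fixes n :: point
  assumes "n \<noteq> 0" "a \<noteq> b" "n \<bullet> a = \<beta>" "n \<bullet> b = \<beta>" "n \<bullet> x = \<beta>"
  obtains t where "x = linepath a b t"
proof -
  have "cross2 (x - a) (b - a) = 0"
    using assms by (intro orthogonal_vec2_imp_cross2_eq_0[of n]) (simp_all add: inner_diff_right)
  then have "x - a = (((x - a) \<bullet> (b - a)) / ((b - a) \<bullet> (b - a))) *\<^sub>R (b - a)"
    using assms(2) by (intro cross2_eq_0_imp_parallel) simp_all
  then have "x = linepath a b (((x - a) \<bullet> (b - a)) / ((b - a) \<bullet> (b - a)))"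
    unfolding linepath_alt by (simp add: algebra_simps)
  then show ?thesis by (rule that)
qed


section \<open>The invariant of newest-vertex bisection\<close>

definition dyadic_edge :: "tri set \<Rightarrow> (point \<Rightarrow> (point \<times> point) option) \<Rightarrow> point \<Rightarrow> point \<Rightarrow> bool" where
  "dyadic_edge T par a b \<longleftrightarrow>
    (\<forall>u v. u \<in> nodes T \<longrightarrow> v \<in> nodes T \<longrightarrow> u \<in> closed_segment a b \<longrightarrow> v \<in> closed_segment a b \<longrightarrow>
        u \<noteq> v \<longrightarrow> open_segment u v \<inter> nodes T = {} \<longrightarrow> dyadic_adj_on a b u v) \<and>
    (\<forall>z \<in> nodes T \<inter> open_segment a b. \<exists>u v. par z = Some (u, v) \<and> u \<in> nodes T \<and> v \<in> nodes T \<and>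
        dyadic_adj_on a b u v \<and> z = midpoint u v)"

definition nvb_invariant :: "tri set \<Rightarrow> (point \<Rightarrow> (point \<times> point) option) \<Rightarrow> bool" where
  "nvb_invariant T par \<longleftrightarrow> finite T \<and> (\<forall>K\<in>T. \<not> collinear (verts K)) \<and>
     (\<forall>K\<in>T. \<forall>K'\<in>T. K \<noteq> K' \<longrightarrow> interior (tri_hull K) \<inter> interior (tri_hull K') = {}) \<and>
     (\<forall>K\<in>T. \<forall>a\<in>verts K. \<forall>b\<in>verts K. a \<noteq> b \<longrightarrow> dyadic_edge T par a b)"

lemma verts_triple: "verts (p, q, r) = {p, q, r}"
  by (simp add: verts_def)

lemma tri_hull_triple: "tri_hull (p, q, r) = convex hull {p, q, r}"
  by (simp add: tri_hull_def verts_def)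

lemma vertex_mem_tri_hull: "v \<in> verts K \<Longrightarrow> v \<in> tri_hull K"
  unfolding tri_hull_def by (simp add: hull_inc)

lemma closed_segment_subset_tri_hull:
  "a \<in> verts K \<Longrightarrow> b \<in> verts K \<Longrightarrow> closed_segment a b \<subseteq> tri_hull K"
  unfolding tri_hull_def by (rule closed_segment_subset_convex_hull)

lemma collinear_if_mem_closed_segment: "v \<in> closed_segment x y \<Longrightarrow> collinear {x, y, v}"
  by (rule collinear_subset[OF collinear_closed_segment[of x y]]) auto

lemma finite_nodes: "finite T \<Longrightarrow> finite (nodes T)"
  by (auto simp: nodes_def verts_def split: prod.splits)

lemma nvb_invariant_finite_nodes: "nvb_invariant T par \<Longrightarrow> finite (nodes T)"
  unfolding nvb_invariant_def using finite_nodes by blast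

lemma nvb_invariant_noncollinear: "nvb_invariant T par \<Longrightarrow> K \<in> T \<Longrightarrow> \<not> collinear (verts K)"
  unfolding nvb_invariant_def by blast

lemma nvb_invariant_interiors_disjoint:
  "nvb_invariant T par \<Longrightarrow> K \<in> T \<Longrightarrow> K' \<in> T \<Longrightarrow> K \<noteq> K' \<Longrightarrow>
    interior (tri_hull K) \<inter> interior (tri_hull K') = {}"
  unfolding nvb_invariant_def by blast

lemma nvb_invariant_dyadic_edge:
  "nvb_invariant T par \<Longrightarrow> K \<in> T \<Longrightarrow> a \<in> verts K \<Longrightarrow> b \<in> verts K \<Longrightarrow> a \<noteq> b \<Longrightarrow>
    dyadic_edge T par a b"
  unfolding nvb_invariant_def by blast

lemma node_not_in_interior:
  assumes I: "nvb_invariant T par" and K: "K \<in> T" and v: "v \<in> nodes T"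
  shows "v \<notin> interior (tri_hull K)"
proof
  assume vi: "v \<in> interior (tri_hull K)"
  obtain K' where K': "K' \<in> T" "v \<in> verts K'" using v unfolding nodes_def by blast
  obtain p q r where K'e: "K' = (p, q, r)" by (cases K')
  have nc: "\<not> collinear {p, q, r}" using nvb_invariant_noncollinear[OF I K'(1)] K'e by (simp add: verts_triple)
  show False
  proof (cases "K = K'")
    case True
    have "v \<in> {p, q, r}" using K'(2) unfolding K'e verts_triple .
    then show False using vertex_not_interior_triangle[OF nc] vi unfolding True K'e tri_hull_triple by blast
  next
    case False
    have "v \<in> closure (interior (tri_hull K'))"
      using closure_interior_triangle[OF nc] vertex_mem_tri_hull[OF K'(2)] unfolding K'e tri_hull_triple by simp
    then have "interior (tri_hull K) \<inter> interior (tri_hull K') \<noteq> {}"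
      using vi open_Int_closure_eq_empty[of "interior (tri_hull K)" "interior (tri_hull K')"] by auto
    then show False using nvb_invariant_interiors_disjoint[OF I K K'(1) False] by simp
  qed
qed

lemma dyadic_edge_commute: "dyadic_edge T par a b \<Longrightarrow> dyadic_edge T par b a"
  unfolding dyadic_edge_def
  by (simp add: closed_segment_commute open_segment_commute) (meson dyadic_adj_on_reverse)

lemma dyadic_edge_cong_nodes: "nodes T' = nodes T \<Longrightarrow> dyadic_edge T' par a b = dyadic_edge T par a b"
  unfolding dyadic_edge_def by simp

lemma dyadic_edge_no_inner_nodes:
  assumes "a \<in> nodes T" "b \<in> nodes T" and e: "nodes T \<inter> open_segment a b = {}"
  shows "dyadic_edge T par a b"
  unfolding dyadic_edge_def
proof (intro conjI allI impI ballI)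
  fix u v assume "u \<in> nodes T" "v \<in> nodes T" "u \<in> closed_segment a b" "v \<in> closed_segment a b" "u \<noteq> v"
  then have "u = a \<and> v = b \<or> u = b \<and> v = a" using e by (auto simp: open_segment_def)
  then show "dyadic_adj_on a b u v" using dyadic_adj_on_ends dyadic_adj_on_sym by blast
next
  fix z assume "z \<in> nodes T \<inter> open_segment a b"
  then show "\<exists>u v. par z = Some (u, v) \<and> u \<in> nodes T \<and> v \<in> nodes T \<and>
      dyadic_adj_on a b u v \<and> z = midpoint u v" using e by simp
qed

lemma dyadic_edge_insert_node:
  assumes N: "nodes T' = insert m (nodes T)" and par: "\<forall>z. z \<noteq> m \<longrightarrow> par' z = par z"
    and E: "dyadic_edge T par a b" and m: "m \<notin> closed_segment a b"
  shows "dyadic_edge T' par' a b"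
  unfolding dyadic_edge_def
proof (intro conjI allI impI ballI)
  fix u v assume u: "u \<in> nodes T'" and v: "v \<in> nodes T'" and us: "u \<in> closed_segment a b"
    and vs: "v \<in> closed_segment a b" and "u \<noteq> v" and o: "open_segment u v \<inter> nodes T' = {}"
  moreover have "u \<in> nodes T" "v \<in> nodes T" using u v us vs m N by auto
  moreover have "open_segment u v \<inter> nodes T = {}" using o N by auto
  ultimately show "dyadic_adj_on a b u v" using E unfolding dyadic_edge_def by blast
next
  fix z assume z: "z \<in> nodes T' \<inter> open_segment a b"
  then have zm: "z \<noteq> m" using m by (auto simp: open_segment_def)
  then have "z \<in> nodes T \<inter> open_segment a b" using z N by auto
  then obtain u v where "par z = Some (u, v)" "u \<in> nodes T" "v \<in> nodes T"
      "dyadic_adj_on a b u v" "z = midpoint u v"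
    using E unfolding dyadic_edge_def by blast
  then show "\<exists>u v. par' z = Some (u, v) \<and> u \<in> nodes T' \<and> v \<in> nodes T' \<and>
      dyadic_adj_on a b u v \<and> z = midpoint u v"
    using par zm N by auto
qed

lemma initial_triangulationD:
  assumes "initial_triangulation T0"
  shows "finite T0"
    and "K \<in> T0 \<Longrightarrow> \<not> collinear (verts K)"
    and "K \<in> T0 \<Longrightarrow> card (verts K) = 3"
    and "K \<in> T0 \<Longrightarrow> K' \<in> T0 \<Longrightarrow> K \<noteq> K' \<Longrightarrow> verts K \<noteq> verts K'"
    and "K \<in> T0 \<Longrightarrow> K' \<in> T0 \<Longrightarrow> K \<noteq> K' \<Longrightarrow>
      tri_hull K \<inter> tri_hull K' = convex hull (verts K \<inter> verts K')"
  using assms unfolding initial_triangulation_def by blast+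

lemma initial_vertex_in_tri_hull:
  assumes T0: "initial_triangulation T0" and K: "K \<in> T0" and K': "K' \<in> T0"
    and v: "v \<in> verts K'" and vh: "v \<in> tri_hull K"
  shows "v \<in> verts K"
proof (rule ccontr)
  assume nv: "v \<notin> verts K"
  then have "K \<noteq> K'" using v by blast
  then have vc: "v \<in> convex hull (verts K \<inter> verts K')"
    using initial_triangulationD(5)[OF T0 K K'] vh vertex_mem_tri_hull[OF v] by blast
  obtain p q r where K'e: "K' = (p, q, r)" by (cases K')
  then have "\<exists>x y. verts K' = {v, x, y}" using v by (auto simp: verts_triple)
  then obtain x y where xy: "verts K' = {v, x, y}" by blast
  then have "verts K \<inter> verts K' \<subseteq> {x, y}" using nv by auto
  then have "v \<in> convex hull {x, y}" using vc hull_mono by blast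
  then have "collinear {x, y, v}" by (simp add: segment_convex_hull collinear_if_mem_closed_segment)
  then have "collinear (verts K')" unfolding xy by (simp add: insert_commute)
  then show False using initial_triangulationD(2)[OF T0 K'] by contradiction
qed

lemma initial_nodes_not_in_open_edge:
  assumes T0: "initial_triangulation T0" and K: "K \<in> T0"
    and a: "a \<in> verts K" and b: "b \<in> verts K" and ab: "a \<noteq> b" and v: "v \<in> nodes T0"
  shows "v \<notin> open_segment a b"
proof
  assume vo: "v \<in> open_segment a b"
  obtain K' where K': "K' \<in> T0" "v \<in> verts K'" using v unfolding nodes_def by blast
  have "v \<in> tri_hull K" using vo closed_segment_subset_tri_hull[OF a b] by (auto simp: open_segment_def)
  then have vK: "v \<in> verts K" using initial_vertex_in_tri_hull[OF T0 K K'] by blast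
  have "v \<noteq> a" "v \<noteq> b" using vo by (auto simp: open_segment_def)
  then have "card {a, b, v} = 3" using ab by simp
  moreover have "finite (verts K)" by (auto simp: verts_def split: prod.splits)
  ultimately have "verts K = {a, b, v}"
    using a b vK initial_triangulationD(3)[OF T0 K] by (intro card_seteq[symmetric]) auto
  moreover have "collinear {a, b, v}"
    using vo by (simp add: open_segment_def collinear_if_mem_closed_segment)
  ultimately show False using initial_triangulationD(2)[OF T0 K] by simp
qed

lemma initial_interiors_disjoint:
  assumes T0: "initial_triangulation T0" and K: "K \<in> T0" and K': "K' \<in> T0" and ne: "K \<noteq> K'"
  shows "interior (tri_hull K) \<inter> interior (tri_hull K') = {}"
proof -
  have fin: "finite (verts K)" "finite (verts K')" by (auto simp: verts_def split: prod.splits)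
  have "card (verts K \<inter> verts K') \<le> 2"
  proof (rule ccontr)
    assume "\<not> card (verts K \<inter> verts K') \<le> 2"
    then have "card (verts K) \<le> card (verts K \<inter> verts K')" "card (verts K') \<le> card (verts K \<inter> verts K')"
      using initial_triangulationD(3)[OF T0 K] initial_triangulationD(3)[OF T0 K'] by simp_all
    then have "verts K \<inter> verts K' = verts K" "verts K \<inter> verts K' = verts K'"
      using card_seteq fin by blast+
    then show False using initial_triangulationD(4)[OF T0 K K' ne] by simp
  qed
  then have "interior (convex hull (verts K \<inter> verts K')) = {}"
    by (intro empty_interior_convex_hull) (use fin in auto)
  then show ?thesis
    using initial_triangulationD(5)[OF T0 K K' ne] interior_Int[of "tri_hull K" "tri_hull K'"] by auto
qed

lemma nvb_invariant_initial:
  assumes T0: "initial_triangulation T0"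
  shows "nvb_invariant T0 (\<lambda>_. None)"
  unfolding nvb_invariant_def
proof (intro conjI ballI impI)
  fix K a b assume K: "K \<in> T0" and a: "a \<in> verts K" and b: "b \<in> verts K" and "a \<noteq> b"
  then show "dyadic_edge T0 (\<lambda>_. None) a b"
    using initial_nodes_not_in_open_edge[OF T0 K a b] K
    by (intro dyadic_edge_no_inner_nodes) (auto simp: nodes_def)
next
  fix K K' assume "K \<in> T0" "K' \<in> T0" "K \<noteq> K'"
  then show "interior (tri_hull K) \<inter> interior (tri_hull K') = {}"
    by (rule initial_interiors_disjoint[OF T0])
qed (use initial_triangulationD[OF T0] in auto)


text \<open>If the midpoint of an edge is not a node, then the nodes of the edge nearest to the midpoint
  on either side are dyadic neighbours straddling it, hence they are the endpoints.\<close>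

lemma dyadic_edge_no_inner_nodes_if_midpoint_not_node:
  assumes E: "dyadic_edge T par p q" and pq: "p \<noteq> q" and fin: "finite (nodes T)"
    and pN: "p \<in> nodes T" and qN: "q \<in> nodes T" and m: "midpoint p q \<notin> nodes T"
  shows "nodes T \<inter> open_segment p q = {}"
proof -
  define S where "S = {t. linepath p q t \<in> nodes T \<and> 0 \<le> t \<and> t \<le> 1}"
  have "inj (linepath p q)" using linepath_eq_iff[OF pq] by (simp add: inj_on_def)
  then have "finite (linepath p q -` nodes T)" using finite_vimageI[OF fin] by blast
  then have "finite S" unfolding S_def by (rule rev_finite_subset) auto
  have S0: "0 \<in> S" and S1: "1 \<in> S" using pN qN unfolding S_def by (auto simp: linepath_0' linepath_1')
  have Sh: "1/2 \<notin> S" using m unfolding S_def midpoint_eq_linepath by auto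
  define L where "L = {t\<in>S. t < 1/2}"
  define H where "H = {t\<in>S. 1/2 < t}"
  have L: "finite L" "L \<noteq> {}" and H: "finite H" "H \<noteq> {}"
    using \<open>finite S\<close> S0 S1 unfolding L_def H_def by auto
  define lo where "lo = Max L"
  define hi where "hi = Min H"
  have lo: "lo \<in> S" "lo < 1/2" "\<And>t. t \<in> S \<Longrightarrow> t < 1/2 \<Longrightarrow> t \<le> lo"
    using Max_in[OF L] Max_ge[OF L(1)] unfolding lo_def L_def by auto
  have hi: "hi \<in> S" "1/2 < hi" "\<And>t. t \<in> S \<Longrightarrow> 1/2 < t \<Longrightarrow> hi \<le> t"
    using Min_in[OF H] Min_le[OF H(1)] unfolding hi_def H_def by auto
  have gap: "t \<le> lo \<or> hi \<le> t" if "t \<in> S" for t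
    using that lo(3) hi(3) Sh by (cases t "1/2 :: real" rule: linorder_cases) auto
  have "open_segment (linepath p q lo) (linepath p q hi) \<inter> nodes T = {}"
  proof (rule ccontr)
    assume "open_segment (linepath p q lo) (linepath p q hi) \<inter> nodes T \<noteq> {}"
    then obtain t where t: "linepath p q t \<in> nodes T" "lo < t" "t < hi"
      using lo(2) hi(2) unfolding open_segment_linepath[OF pq] by (auto simp: open_segment_eq_real_ivl)
    moreover have "0 \<le> lo" "hi \<le> 1" using lo(1) hi(1) unfolding S_def by auto
    ultimately have "t \<in> S" unfolding S_def by auto
    then show False using gap t by force
  qed
  moreover have "linepath p q lo \<in> closed_segment p q" "linepath p q hi \<in> closed_segment p q"
    "linepath p q lo \<in> nodes T" "linepath p q hi \<in> nodes T"
    using lo(1) hi(1) unfolding S_def linepath_image_01[symmetric] by auto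
  moreover have "linepath p q lo \<noteq> linepath p q hi" using linepath_eq_iff[OF pq] lo(2) hi(2) by simp
  ultimately have "dyadic_adj_on p q (linepath p q lo) (linepath p q hi)"
    using E unfolding dyadic_edge_def by blast
  then have "dyadic_adj lo hi" unfolding dyadic_adj_on_def using linepath_eq_iff[OF pq] by auto
  then have lh: "lo = 0" "hi = 1" using dyadic_adj_straddle_half lo(2) hi(2) by blast+
  show ?thesis
  proof (rule ccontr)
    assume "nodes T \<inter> open_segment p q \<noteq> {}"
    then obtain t where "linepath p q t \<in> nodes T" "0 < t" "t < 1"
      unfolding open_segment_linepath_image[OF pq] by auto
    then show False using gap[of t] lh unfolding S_def by auto
  qed
qed

text \<open>A new midpoint on the edge of a neighbouring element lies on the common line, because the
  two elements are separated by a line through it.\<close>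

lemma edge_of_neighbour_on_line:
  assumes I: "nvb_invariant T par" and K: "K \<in> T" and K0: "K0 \<in> T" and KK0: "K \<noteq> K0"
    and a: "a \<in> verts K" and b: "b \<in> verts K" and ab: "a \<noteq> b"
    and p: "p \<in> verts K0" and q: "q \<in> verts K0" and pq: "p \<noteq> q"
    and mab: "midpoint p q \<in> open_segment a b"
  obtains tp tq where "p = linepath a b tp" "q = linepath a b tq"
proof -
  obtain p1 q1 r1 where Ke: "K = (p1, q1, r1)" by (cases K)
  obtain p0 q0 r0 where K0e: "K0 = (p0, q0, r0)" by (cases K0)
  obtain n \<beta> where n: "n \<noteq> 0"
    and le: "\<forall>x\<in>tri_hull K. n \<bullet> x \<le> \<beta>" and ge: "\<forall>x\<in>tri_hull K0. \<beta> \<le> n \<bullet> x"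
    using separating_line_triangles[of p1 q1 r1 p0 q0 r0] nvb_invariant_interiors_disjoint[OF I K K0 KK0]
      nvb_invariant_noncollinear[OF I K] nvb_invariant_noncollinear[OF I K0]
    unfolding Ke K0e verts_triple tri_hull_triple by metis
  define m where "m = midpoint p q"
  have mpq: "m \<in> open_segment p q" unfolding m_def using pq by simp
  have "m \<in> tri_hull K" "m \<in> tri_hull K0"
    using closed_segment_subset_tri_hull[OF a b] closed_segment_subset_tri_hull[OF p q] mab mpq
    unfolding m_def by (auto simp: open_segment_def)
  then have nm: "n \<bullet> m = \<beta>" using le ge by (meson order_antisym)
  have "n \<bullet> a = \<beta>" "n \<bullet> b = \<beta>"
    using supporting_line_segment[of n a \<beta> b m] le vertex_mem_tri_hull[OF a] vertex_mem_tri_hull[OF b]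
      mab nm unfolding m_def by auto
  moreover have "(- n) \<bullet> p \<le> - \<beta>" "(- n) \<bullet> q \<le> - \<beta>"
    using ge vertex_mem_tri_hull[OF p] vertex_mem_tri_hull[OF q] by auto
  then have "n \<bullet> p = \<beta>" "n \<bullet> q = \<beta>"
    using supporting_line_segment[of "- n" p "- \<beta>" q m] mpq nm by auto
  ultimately show ?thesis using on_line_imp_linepath[OF n ab] that by metis
qed

lemma nearest_nodes_to_midpoint:
  fixes S :: "point set"
  assumes ab: "a \<noteq> b" and tp: "p = linepath a b tp" and tq: "q = linepath a b tq" and pq: "p \<noteq> q"
    and S: "p \<in> S" "q \<in> S" "S \<inter> open_segment p q = {}"
    and v: "v \<in> S" "v \<in> closed_segment a b" "v \<noteq> midpoint p q"
    and empty: "open_segment (midpoint p q) v \<inter> S = {}"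
  shows "v = p \<or> v = q"
proof (rule ccontr)
  assume nv: "\<not> (v = p \<or> v = q)"
  obtain tv where tv: "v = linepath a b tv" using v(2) unfolding linepath_image_01[symmetric] by auto
  have "tp \<noteq> tq" "tv \<noteq> tp" "tv \<noteq> tq" "tv \<noteq> (tp + tq) / 2"
    using pq nv v(3) unfolding tv tp tq midpoint_linepath by (auto simp: linepath_eq_iff[OF ab])
  then have "tv \<in> open_segment tp tq \<or> tp \<in> open_segment ((tp + tq) / 2) tv \<or>
      tq \<in> open_segment ((tp + tq) / 2) tv"
    by (cases "tp \<le> tq"; cases "tv \<le> tp"; cases "tv \<le> tq") (auto simp: open_segment_eq_real_ivl)
  then have "v \<in> open_segment p q \<or> p \<in> open_segment (midpoint p q) v \<or> q \<in> open_segment (midpoint p q) v"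
    unfolding tv tp tq midpoint_linepath open_segment_linepath[OF ab] by blast
  then show False using S v(1) empty by blast
qed

lemma dyadic_edge_insert_midpoint:
  assumes E: "dyadic_edge T par a b" and ab: "a \<noteq> b" "a \<in> nodes T" "b \<in> nodes T"
    and pq: "p \<noteq> q" "p \<in> nodes T" "q \<in> nodes T"
    and tpq: "p = linepath a b tp" "q = linepath a b tq"
    and noopen: "nodes T \<inter> open_segment p q = {}"
    and mab: "midpoint p q \<in> open_segment a b" and mN: "midpoint p q \<notin> nodes T"
    and N: "nodes T' = insert (midpoint p q) (nodes T)"
    and par': "par' = par(midpoint p q := Some (p, q))"
  shows "dyadic_edge T' par' a b"
proof -
  define m where "m = midpoint p q"
  have "(tp + tq) / 2 \<in> {0<..<1}"
    using mab linepath_eq_iff[OF ab(1)] midpoint_linepath[of a b tp tq]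
    unfolding open_segment_linepath_image[OF ab(1)] tpq by auto
  moreover have "0 \<notin> open_segment tp tq" "1 \<notin> open_segment tp tq"
    using noopen ab(2,3) unfolding tpq open_segment_linepath[OF ab(1)]
    by (metis IntI linepath_0' linepath_1' empty_iff image_eqI)+
  moreover have "tp \<noteq> tq" using pq tpq by auto
  ultimately have "0 \<le> tp \<and> tp \<le> 1 \<and> 0 \<le> tq \<and> tq \<le> 1"
    by (cases "tp \<le> tq") (auto simp: open_segment_eq_real_ivl)
  then have "p \<in> closed_segment a b" "q \<in> closed_segment a b"
    unfolding linepath_image_01[symmetric] tpq by auto
  then have dpq: "dyadic_adj_on a b p q" using E pq noopen unfolding dyadic_edge_def by blast
  have dm: "dyadic_adj_on a b m p" "dyadic_adj_on a b m q"
    using dyadic_adj_on_sym[OF dyadic_adj_on_midpoint[OF dpq]]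
      dyadic_adj_on_sym[OF dyadic_adj_on_midpoint[OF dyadic_adj_on_sym[OF dpq]]]
    unfolding m_def by (simp_all add: midpoint_sym)
  have nbr: "v = p \<or> v = q" if "v \<in> nodes T" "v \<in> closed_segment a b" "v \<noteq> m"
      "open_segment m v \<inter> nodes T' = {}" for v
    using nearest_nodes_to_midpoint[OF ab(1) tpq pq(1) pq(2,3) noopen] that N unfolding m_def by auto
  show ?thesis
    unfolding dyadic_edge_def
  proof (intro conjI allI impI ballI)
    fix u v assume u: "u \<in> nodes T'" and v: "v \<in> nodes T'" and us: "u \<in> closed_segment a b"
      and vs: "v \<in> closed_segment a b" and uv: "u \<noteq> v" and o: "open_segment u v \<inter> nodes T' = {}"
    consider "u = m" | "v = m" | "u \<noteq> m" "v \<noteq> m" by blast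
    then show "dyadic_adj_on a b u v"
    proof cases
      case 1
      then show ?thesis using nbr[of v] v vs uv o N dm unfolding m_def by auto
    next
      case 2
      then show ?thesis using nbr[of u] u us uv o N dm dyadic_adj_on_sym
        unfolding m_def by (auto simp: open_segment_commute)
    next
      case 3
      then have "u \<in> nodes T" "v \<in> nodes T" "open_segment u v \<inter> nodes T = {}"
        using u v o N unfolding m_def by auto
      then show ?thesis using E us vs uv unfolding dyadic_edge_def by blast
    qed
  next
    fix z assume z: "z \<in> nodes T' \<inter> open_segment a b"
    show "\<exists>u v. par' z = Some (u, v) \<and> u \<in> nodes T' \<and> v \<in> nodes T' \<and>
        dyadic_adj_on a b u v \<and> z = midpoint u v"
    proof (cases "z = m")
      case True
      then show ?thesis using par' N pq dpq unfolding m_def by auto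
    next
      case False
      then have "z \<in> nodes T \<inter> open_segment a b" using z N unfolding m_def by auto
      then obtain u v where "par z = Some (u, v)" "u \<in> nodes T" "v \<in> nodes T"
          "dyadic_adj_on a b u v" "z = midpoint u v"
        using E unfolding dyadic_edge_def by blast
      then show ?thesis using par' False N unfolding m_def by auto
    qed
  qed
qed


lemma bisect_children_noncollinear:
  assumes "\<not> collinear {p, q, r::point}"
  shows "\<not> collinear {r, p, midpoint p q}" "\<not> collinear {q, r, midpoint p q}"
proof -
  have "cross2 (p - r) (midpoint p q - r) = (1/2) * cross2 (q - p) (r - p)"
    "cross2 (r - q) (midpoint p q - q) = (1/2) * cross2 (q - p) (r - p)"
    by (simp_all add: cross2_def midpoint_def field_simps)
  then show "\<not> collinear {r, p, midpoint p q}" "\<not> collinear {q, r, midpoint p q}"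
    using assms unfolding collinear_3_iff_cross2 by simp_all
qed

lemma bisect_children_subset:
  "convex hull {r, p, midpoint p q} \<subseteq> convex hull {p, q, r::point}"
  "convex hull {q, r, midpoint p q} \<subseteq> convex hull {p, q, r::point}"
proof -
  have "midpoint p q \<in> convex hull {p, q, r}"
    using closed_segment_subset_convex_hull[of p "{p, q, r}" q] midpoint_in_closed_segment[of p q] by auto
  then show "convex hull {r, p, midpoint p q} \<subseteq> convex hull {p, q, r}"
    "convex hull {q, r, midpoint p q} \<subseteq> convex hull {p, q, r}"
    by (intro hull_minimal; auto simp: hull_inc)+
qed

text \<open>The two children lie on opposite sides of the median from r.\<close>

lemma bisect_children_interiors_disjoint:
  assumes nc: "\<not> collinear {p, q, r::point}"
  shows "interior (convex hull {r, p, midpoint p q}) \<inter> interior (convex hull {q, r, midpoint p q}) = {}"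
proof (rule ccontr)
  define m where "m = midpoint p q"
  assume "interior (convex hull {r, p, midpoint p q}) \<inter> interior (convex hull {q, r, midpoint p q}) \<noteq> {}"
  then obtain x where x1: "x \<in> interior (convex hull {r, p, m})" and x2: "x \<in> interior (convex hull {q, r, m})"
    unfolding m_def by blast
  obtain a b c where abc: "0 < b" "a + b + c = 1" "x = a *\<^sub>R r + b *\<^sub>R p + c *\<^sub>R m"
    using x1 interior_triangle[OF bisect_children_noncollinear(1)[OF nc]] unfolding m_def by auto
  obtain a' b' c' where abc': "0 < a'" "a' + b' + c' = 1" "x = a' *\<^sub>R q + b' *\<^sub>R r + c' *\<^sub>R m"
    using x2 interior_triangle[OF bisect_children_noncollinear(2)[OF nc]] unfolding m_def by auto
  define C where "C = cross2 (m - r) (p - r)"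
  have "x - r = b *\<^sub>R (p - r) + c *\<^sub>R (m - r)"
    using convex_comb3_minus_first[OF abc(2)] abc(3) by simp
  then have "cross2 (m - r) (x - r) = b * C" unfolding C_def by (simp add: cross2_simps)
  moreover have "x - r = a' *\<^sub>R (q - r) + c' *\<^sub>R (m - r)"
    using convex_comb3_minus_first[of b' a' c' r q m] abc'(2,3) by (simp add: algebra_simps)
  moreover have "cross2 (m - r) (q - r) = - C"
    unfolding C_def m_def by (simp add: cross2_def midpoint_def field_simps)
  ultimately have "b * C = - a' * C" by (simp add: cross2_simps)
  then have "(b + a') * C = 0" by (simp add: algebra_simps)
  moreover have "C \<noteq> 0"
    using bisect_children_noncollinear(1)[OF nc] cross2_commute[of "p - r" "m - r"]
    unfolding collinear_3_iff_cross2 C_def m_def by auto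
  ultimately show False using abc(1) abc'(1) by simp
qed

lemma dyadic_edge_half:
  assumes I: "nvb_invariant T par" and K0: "K0 \<in> T" and p: "p \<in> verts K0" and q: "q \<in> verts K0"
    and pq: "p \<noteq> q" and N: "nodes T' = insert (midpoint p q) (nodes T)"
    and par': "midpoint p q \<in> nodes T \<Longrightarrow> par' = par"
  shows "dyadic_edge T' par' p (midpoint p q)"
proof -
  define m where "m = midpoint p q"
  have E: "dyadic_edge T par p q" using nvb_invariant_dyadic_edge[OF I K0 p q pq] .
  have pN: "p \<in> nodes T" and qN: "q \<in> nodes T" using p q K0 unfolding nodes_def by auto
  show ?thesis
  proof (cases "m \<in> nodes T")
    case False
    have "nodes T \<inter> open_segment p q = {}"
      using dyadic_edge_no_inner_nodes_if_midpoint_not_node[OF E pq nvb_invariant_finite_nodes[OF I] pN qN]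
        False unfolding m_def by blast
    then have "nodes T' \<inter> open_segment p m = {}"
      using open_segment_half_subset[of p q] N unfolding m_def by (auto simp: open_segment_def)
    then show ?thesis using dyadic_edge_no_inner_nodes[of p T' m par'] N pN unfolding m_def by auto
  next
    case True
    then have NT: "nodes T' = nodes T" and pp: "par' = par" using N par' unfolding m_def by auto
    have "dyadic_edge T par p m"
      unfolding dyadic_edge_def
    proof (intro conjI allI impI ballI)
      fix u v assume "u \<in> nodes T" "v \<in> nodes T" "u \<in> closed_segment p m" "v \<in> closed_segment p m"
        "u \<noteq> v" "open_segment u v \<inter> nodes T = {}"
      moreover have "closed_segment p m \<subseteq> closed_segment p q"
        unfolding m_def by (simp add: closed_segment_subset)
      ultimately show "dyadic_adj_on p m u v"
        using E dyadic_adj_on_half[OF pq] unfolding dyadic_edge_def m_def by blast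
    next
      fix z assume z: "z \<in> nodes T \<inter> open_segment p m"
      then have "z \<in> nodes T \<inter> open_segment p q" using open_segment_half_subset unfolding m_def by blast
      then obtain u v where uv: "par z = Some (u, v)" "u \<in> nodes T" "v \<in> nodes T"
          "dyadic_adj_on p q u v" "z = midpoint u v"
        using E unfolding dyadic_edge_def by blast
      then have "dyadic_adj_on p m u v" using dyadic_adj_on_half_midpoint[OF pq] z unfolding m_def by blast
      then show "\<exists>u v. par z = Some (u, v) \<and> u \<in> nodes T \<and> v \<in> nodes T \<and>
          dyadic_adj_on p m u v \<and> z = midpoint u v"
        using uv by blast
    qed
    then show ?thesis using NT pp dyadic_edge_cong_nodes unfolding m_def by blast
  qed
qed

lemma dyadic_edge_median:
  assumes I: "nvb_invariant T par" and K0: "(p, q, r) \<in> T"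
    and N: "nodes T' = insert (midpoint p q) (nodes T)"
  shows "dyadic_edge T' par' r (midpoint p q)"
proof -
  have nc: "\<not> collinear {p, q, r}" using nvb_invariant_noncollinear[OF I K0] by (simp add: verts_triple)
  have "nodes T \<inter> open_segment r (midpoint p q) = {}"
    using node_not_in_interior[OF I K0] median_subset_interior_triangle[OF nc]
    unfolding tri_hull_triple by blast
  then have "nodes T' \<inter> open_segment r (midpoint p q) = {}" using N by (auto simp: open_segment_def)
  moreover have "r \<in> nodes T" using K0 unfolding nodes_def by (force simp: verts_triple)
  ultimately show ?thesis using dyadic_edge_no_inner_nodes N by auto
qed

lemma nodes_Un: "nodes (A \<union> B) = nodes A \<union> nodes B"
  by (simp add: nodes_def)

lemma nodes_bisect:
  assumes "(p, q, r) \<in> T"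
  shows "nodes ((T - {(p, q, r)}) \<union> bisect (p, q, r)) = insert (midpoint p q) (nodes T)"
proof -
  have "nodes T = nodes (T - {(p, q, r)}) \<union> {p, q, r}"
    using assms unfolding nodes_def verts_triple[symmetric] by blast
  moreover have "nodes (bisect (p, q, r)) = {p, q, r, midpoint p q}"
    by (auto simp: nodes_def bisect_def verts_triple)
  ultimately show ?thesis by (auto simp: nodes_Un)
qed


lemma bisect_interiors_disjoint:
  assumes I: "nvb_invariant T par" and K0: "(p, q, r) \<in> T"
    and K: "K \<in> (T - {(p, q, r)}) \<union> bisect (p, q, r)" and K': "K' \<in> (T - {(p, q, r)}) \<union> bisect (p, q, r)"
    and ne: "K \<noteq> K'"
  shows "interior (tri_hull K) \<inter> interior (tri_hull K') = {}"
proof -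
  have nc: "\<not> collinear {p, q, r}" using nvb_invariant_noncollinear[OF I K0] by (simp add: verts_triple)
  have children: "bisect (p, q, r) = {(r, p, midpoint p q), (q, r, midpoint p q)}"
    by (simp add: bisect_def)
  have sub: "interior (tri_hull C) \<subseteq> interior (tri_hull (p, q, r))" if "C \<in> bisect (p, q, r)" for C
  proof (rule interior_mono)
    show "tri_hull C \<subseteq> tri_hull (p, q, r)"
      using that bisect_children_subset[where p = p and q = q and r = r]
      unfolding children by (auto simp: tri_hull_triple)
  qed
  have old: "interior (tri_hull C) \<inter> interior (tri_hull (p, q, r)) = {}" if "C \<in> T - {(p, q, r)}" for C
    using that nvb_invariant_interiors_disjoint[OF I _ K0] by blast
  consider "K \<in> bisect (p, q, r)" "K' \<in> bisect (p, q, r)" | "K \<in> bisect (p, q, r)" "K' \<in> T - {(p, q, r)}"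
    | "K \<in> T - {(p, q, r)}" "K' \<in> bisect (p, q, r)" | "K \<in> T - {(p, q, r)}" "K' \<in> T - {(p, q, r)}"
    using K K' by blast
  then show ?thesis
  proof cases
    case 1
    then show ?thesis using ne bisect_children_interiors_disjoint[OF nc]
      unfolding children by (auto simp: Int_commute tri_hull_triple)
  next
    case 2
    then show ?thesis using sub old by blast
  next
    case 3
    then show ?thesis using sub old by blast
  next
    case 4
    then show ?thesis using nvb_invariant_interiors_disjoint[OF I _ _ ne] by blast
  qed
qed

lemma bisect_dyadic_edges:
  assumes I: "nvb_invariant T par" and K0: "(p, q, r) \<in> T"
    and T': "T' = (T - {(p, q, r)}) \<union> bisect (p, q, r)"
    and par': "par' = (if midpoint p q \<in> nodes T then par else par(midpoint p q := Some (p, q)))"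
    and K: "K \<in> T'" and a: "a \<in> verts K" and b: "b \<in> verts K" and ab: "a \<noteq> b"
  shows "dyadic_edge T' par' a b"
proof -
  define m where "m = midpoint p q"
  have nc: "\<not> collinear {p, q, r}" using nvb_invariant_noncollinear[OF I K0] by (simp add: verts_triple)
  have d: "p \<noteq> q" "q \<noteq> r" "p \<noteq> r" using triangle_distinct[OF nc] .
  have vK0: "p \<in> verts (p, q, r)" "q \<in> verts (p, q, r)" "r \<in> verts (p, q, r)" by (simp_all add: verts_triple)
  have N: "nodes T' = insert m (nodes T)" unfolding T' m_def by (rule nodes_bisect[OF K0])
  have parO: "\<forall>z. z \<noteq> m \<longrightarrow> par' z = par z" and parM: "m \<in> nodes T \<Longrightarrow> par' = par"
    unfolding par' m_def by auto
  have "m \<notin> closed_segment r p" "m \<notin> closed_segment q r"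
    using collinear_if_mem_closed_segment bisect_children_noncollinear[OF nc] unfolding m_def by blast+
  then have rp: "dyadic_edge T' par' r p" and qr: "dyadic_edge T' par' q r"
    using dyadic_edge_insert_node[OF N parO] nvb_invariant_dyadic_edge[OF I K0] vK0 d by metis+
  have rm: "dyadic_edge T' par' r m"
    using dyadic_edge_median[OF I K0 N[unfolded m_def]] unfolding m_def .
  have pm: "dyadic_edge T' par' p m" and qm: "dyadic_edge T' par' q m"
    using dyadic_edge_half[OF I K0 vK0(1,2) d(1) N[unfolded m_def]]
      dyadic_edge_half[OF I K0 vK0(2,1) d(1)[symmetric], of T' par'] N parM
    unfolding m_def by (auto simp: midpoint_sym)
  consider "K = (r, p, m)" | "K = (q, r, m)" | "K \<in> T" "K \<noteq> (p, q, r)"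
    using K unfolding T' bisect_def m_def by auto
  then show ?thesis
  proof cases
    case 1
    then have "a \<in> {r, p, m}" "b \<in> {r, p, m}" using a b by (simp_all add: verts_triple)
    then show ?thesis using ab rp rm pm dyadic_edge_commute by auto
  next
    case 2
    then have "a \<in> {q, r, m}" "b \<in> {q, r, m}" using a b by (simp_all add: verts_triple)
    then show ?thesis using ab qr rm qm dyadic_edge_commute by auto
  next
    case 3
    note KT = 3
    have E: "dyadic_edge T par a b" using nvb_invariant_dyadic_edge[OF I KT(1) a b ab] .
    consider "m \<in> nodes T" | "m \<notin> nodes T" "m \<notin> closed_segment a b"
      | "m \<notin> nodes T" "m \<in> closed_segment a b" by blast
    then show ?thesis
    proof cases
      case 1
      then show ?thesis using E parM N dyadic_edge_cong_nodes[of T' T] by (simp add: insert_absorb)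
    next
      case 2
      then show ?thesis using dyadic_edge_insert_node[OF N parO E] by blast
    next
      case 3
      have abN: "a \<in> nodes T" "b \<in> nodes T" using a b KT(1) unfolding nodes_def by auto
      then have mab: "m \<in> open_segment a b" using 3 by (auto simp: open_segment_def)
      obtain tp tq where tpq: "p = linepath a b tp" "q = linepath a b tq"
        using edge_of_neighbour_on_line[OF I KT(1) K0 KT(2) a b ab vK0(1,2) d(1)] mab unfolding m_def by blast
      have "nodes T \<inter> open_segment p q = {}"
        using dyadic_edge_no_inner_nodes_if_midpoint_not_node[OF nvb_invariant_dyadic_edge[OF I K0 vK0(1,2) d(1)]
            d(1) nvb_invariant_finite_nodes[OF I]] vK0 K0 3 unfolding m_def nodes_def by blast
      moreover have "p \<in> nodes T" "q \<in> nodes T" using K0 vK0 unfolding nodes_def by auto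
      ultimately show ?thesis
        using dyadic_edge_insert_midpoint[OF E ab abN d(1) _ _ tpq _ _ _ N[unfolded m_def]] mab 3 par'
        unfolding m_def by auto
    qed
  qed
qed

lemma nvb_invariant_bisect:
  assumes I: "nvb_invariant T par" and K0: "K0 \<in> T"
  shows "nvb_invariant ((T - {K0}) \<union> bisect K0)
           (if ref_mid K0 \<in> nodes T then par else par(ref_mid K0 := Some (ref_edge K0)))"
proof -
  obtain p q r where K0e: "K0 = (p, q, r)" by (cases K0)
  have K0T: "(p, q, r) \<in> T" using K0 K0e by simp
  have nc: "\<not> collinear {p, q, r}" using nvb_invariant_noncollinear[OF I K0T] by (simp add: verts_triple)
  have rm: "ref_mid (p, q, r) = midpoint p q" and re: "ref_edge (p, q, r) = (p, q)"
    by (simp_all add: ref_mid_def ref_edge_def)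
  show ?thesis
    unfolding nvb_invariant_def K0e
  proof (intro conjI ballI impI)
    show "finite ((T - {(p, q, r)}) \<union> bisect (p, q, r))"
      using I unfolding nvb_invariant_def bisect_def by simp
  next
    fix K assume K: "K \<in> (T - {(p, q, r)}) \<union> bisect (p, q, r)"
    show "\<not> collinear (verts K)"
    proof (cases "K \<in> T")
      case True
      then show ?thesis using nvb_invariant_noncollinear[OF I] by blast
    next
      case False
      then have "K \<in> bisect (p, q, r)" using K by blast
      then show ?thesis using bisect_children_noncollinear[OF nc] unfolding bisect_def
        by (auto simp: verts_triple)
    qed
  next
    fix K K' assume "K \<in> (T - {(p, q, r)}) \<union> bisect (p, q, r)"
      "K' \<in> (T - {(p, q, r)}) \<union> bisect (p, q, r)" "K \<noteq> K'"
    then show "interior (tri_hull K) \<inter> interior (tri_hull K') = {}"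
      by (rule bisect_interiors_disjoint[OF I K0T])
  next
    fix K a b assume "K \<in> (T - {(p, q, r)}) \<union> bisect (p, q, r)" "a \<in> verts K" "b \<in> verts K" "a \<noteq> b"
    then have "dyadic_edge ((T - {(p, q, r)}) \<union> bisect (p, q, r))
        (if midpoint p q \<in> nodes T then par else par(midpoint p q := Some (p, q))) a b"
      by (rule bisect_dyadic_edges[OF I K0T refl refl])
    then show "dyadic_edge ((T - {(p, q, r)}) \<union> bisect (p, q, r))
        (if ref_mid (p, q, r) \<in> nodes T then par
         else par(ref_mid (p, q, r) := Some (ref_edge (p, q, r)))) a b"
      unfolding rm re .
  qed
qed

lemma nvb_reach_invariant:
  assumes "nvb_reach T0 T par" and "initial_triangulation T0"
  shows "nvb_invariant T par"
  using assms
proof induction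
  case init
  then show ?case by (rule nvb_invariant_initial)
next
  case (step T par K)
  then show ?case using nvb_invariant_bisect by blast
qed


section \<open>Hanging nodes and their details\<close>

lemma elem_node_mem_tri_hull: "z \<in> elem_nodes T E \<Longrightarrow> z \<in> tri_hull E"
proof -
  assume "z \<in> elem_nodes T E"
  moreover have "closed (tri_hull E)" unfolding tri_hull_def
    by (simp add: compact_imp_closed finite_imp_compact_convex_hull verts_def split: prod.splits)
  ultimately show ?thesis unfolding elem_nodes_def frontier_def by (simp add: closure_closed)
qed

lemma hanging_node_parents:
  assumes I: "nvb_invariant T par" and E: "E \<in> T" and z: "z \<in> hang_nodes T E"
  obtains u v where "par z = Some (u, v)" "u \<in> elem_nodes T E" "v \<in> elem_nodes T E" "z = midpoint u v"
proof -
  obtain p q r where Ee: "E = (p, q, r)" by (cases E)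
  have nc: "\<not> collinear {p, q, r}" using nvb_invariant_noncollinear[OF I E] Ee by (simp add: verts_triple)
  have zN: "z \<in> nodes T" and zf: "z \<in> frontier (convex hull {p, q, r})" and zv: "z \<notin> {p, q, r}"
    using z unfolding hang_nodes_def elem_nodes_def Ee tri_hull_triple verts_triple by auto
  obtain a b where ab: "a \<in> {p, q, r}" "b \<in> {p, q, r}" "a \<noteq> b" "z \<in> open_segment a b"
    using frontier_triangle_not_vertex[OF nc zf zv] triangle_distinct[OF nc] by blast
  have "dyadic_edge T par a b" using nvb_invariant_dyadic_edge[OF I E] ab unfolding Ee verts_triple by blast
  then obtain u v where uv: "par z = Some (u, v)" "u \<in> nodes T" "v \<in> nodes T" "dyadic_adj_on a b u v"
      "z = midpoint u v"
    using zN ab(4) unfolding dyadic_edge_def by blast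
  then have "u \<in> frontier (tri_hull E)" "v \<in> frontier (tri_hull E)"
    using dyadic_adj_on_closed_segment[OF uv(4)] edge_subset_frontier_triangle[OF nc ab(1-3)]
    unfolding Ee tri_hull_triple by auto
  then show ?thesis using that uv unfolding elem_nodes_def by blast
qed

lemma detail_hanging_node:
  assumes I: "nvb_invariant T par" and E: "E \<in> T" and z: "z \<in> hang_nodes T E"
  obtains u v where "par z = Some (u, v)" "u \<in> elem_nodes T E" "v \<in> elem_nodes T E" "z = midpoint u v"
    "detail par E w z = w z - (w u + w v) / 2"
proof -
  obtain u v where uv: "par z = Some (u, v)" "u \<in> elem_nodes T E" "v \<in> elem_nodes T E" "z = midpoint u v"
    using hanging_node_parents[OF I E z] .
  moreover have "z \<notin> verts E" using z unfolding hang_nodes_def by blast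
  ultimately show ?thesis using that unfolding detail_def by simp
qed

section \<open>Affine interpolation\<close>

lemma affine_fun_interpolates_3:
  assumes nc: "\<not> collinear {p, q, r::point}"
  obtains f where "affine_fun f" "f p = fp" "f q = fq" "f r = fr"
proof -
  define u where "u = q - p"
  define w where "w = r - p"
  define D where "D = u$1 * w$2 - u$2 * w$1"
  have D: "D \<noteq> 0" using nc unfolding collinear_3_iff_cross2 cross2_def D_def u_def w_def .
  define \<alpha> where "\<alpha> = fq - fp"
  define \<beta> where "\<beta> = fr - fp"
  define a :: point where "a = vector [(\<alpha> * w$2 - \<beta> * u$2) / D, (\<beta> * u$1 - \<alpha> * w$1) / D]"
  have "(\<alpha> * w$2 - \<beta> * u$2) * u$1 + (\<beta> * u$1 - \<alpha> * w$1) * u$2 = \<alpha> * D"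
    "(\<alpha> * w$2 - \<beta> * u$2) * w$1 + (\<beta> * u$1 - \<alpha> * w$1) * w$2 = \<beta> * D"
    unfolding D_def by (simp_all only: algebra_simps)
  then have "a \<bullet> u = \<alpha>" "a \<bullet> w = \<beta>"
    using D unfolding a_def inner_vec2 by (simp_all add: add_divide_distrib[symmetric] divide_simps)
  then have "a \<bullet> q = a \<bullet> p + \<alpha>" "a \<bullet> r = a \<bullet> p + \<beta>"
    unfolding u_def w_def by (simp_all add: inner_diff_right)
  moreover have "affine_fun (\<lambda>x. a \<bullet> x + (fp - a \<bullet> p))" unfolding affine_fun_def by blast
  ultimately show ?thesis using that[of "\<lambda>x. a \<bullet> x + (fp - a \<bullet> p)"] unfolding \<alpha>_def \<beta>_def by simp
qed

lemma affine_fun_eqI_3: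
  assumes nc: "\<not> collinear {p, q, r::point}" and f: "affine_fun f" and g: "affine_fun g"
    and e: "f p = g p" "f q = g q" "f r = g r"
  shows "f = g"
proof -
  obtain a b where fa: "\<And>x. f x = a \<bullet> x + b" using f unfolding affine_fun_def by blast
  obtain a' b' where ga: "\<And>x. g x = a' \<bullet> x + b'" using g unfolding affine_fun_def by blast
  have "(a - a') \<bullet> (q - p) = 0" "(a - a') \<bullet> (r - p) = 0"
    using e unfolding fa ga by (simp_all add: inner_diff_left inner_diff_right algebra_simps)
  moreover have "cross2 (q - p) (r - p) \<noteq> 0" using nc unfolding collinear_3_iff_cross2 .
  ultimately have "a - a' = 0" using orthogonal_vec2_imp_cross2_eq_0 by blast
  then have "a = a'" "b = b'" using e(1) unfolding fa ga by simp_all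
  then show ?thesis by (simp add: fun_eq_iff fa ga)
qed

lemma interp_eq_restr_affine:
  assumes nc: "\<not> collinear (verts E)"
  obtains F where "affine_fun F" "\<forall>x\<in>verts E. F x = v x" "interp E v = restr E F"
proof -
  obtain p q r where Ee: "E = (p, q, r)" by (cases E)
  have nc3: "\<not> collinear {p, q, r}" using nc Ee by (simp add: verts_triple)
  obtain f where f: "affine_fun f" "f p = v p" "f q = v q" "f r = v r"
    using affine_fun_interpolates_3[OF nc3] .
  have "(THE f. affine_fun f \<and> (\<forall>x\<in>verts E. f x = v x)) = f"
  proof (rule the_equality)
    show "affine_fun f \<and> (\<forall>x\<in>verts E. f x = v x)" using f Ee by (simp add: verts_triple)
  next
    fix g assume "affine_fun g \<and> (\<forall>x\<in>verts E. g x = v x)"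
    then show "g = f" using affine_fun_eqI_3[OF nc3, of g f] f Ee by (simp add: verts_triple)
  qed
  then show ?thesis using that f Ee unfolding interp_def by (simp add: verts_triple)
qed

lemma affine_fun_midpoint: "affine_fun F \<Longrightarrow> F (midpoint u v) = (F u + F v) / 2"
  unfolding affine_fun_def midpoint_def by (auto simp: inner_add_right field_simps)

text \<open>The interpolant is affine, so it has no details at hanging nodes.\<close>

lemma detail_interp_error:
  assumes I: "nvb_invariant T par" and E: "E \<in> T" and z: "z \<in> hang_nodes T E"
  shows "detail par E (\<lambda>y. v y - interp E v y) z = detail par E v z"
proof -
  obtain F where F: "affine_fun F" "\<forall>x\<in>verts E. F x = v x" "interp E v = restr E F"
    using interp_eq_restr_affine[OF nvb_invariant_noncollinear[OF I E]] .
  obtain u u' where uu: "par z = Some (u, u')" "u \<in> elem_nodes T E" "u' \<in> elem_nodes T E" "z = midpoint u u'"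
    using hanging_node_parents[OF I E z] .
  have "z \<in> elem_nodes T E" using z unfolding hang_nodes_def by blast
  then have "interp E v z = (interp E v u + interp E v u') / 2"
    using uu elem_node_mem_tri_hull affine_fun_midpoint[OF F(1)] unfolding F(3) restr_def by simp
  moreover have "z \<notin> verts E" using z unfolding hang_nodes_def by blast
  ultimately show ?thesis using uu(1) unfolding detail_def by (simp add: field_simps)
qed

lemma VE_space_closed:
  assumes "VE_space T E V"
  shows "P1 E \<subseteq> V" and "v \<in> V \<Longrightarrow> w \<in> V \<Longrightarrow> (\<lambda>x. v x + w x) \<in> V"
    and "v \<in> V \<Longrightarrow> (\<lambda>x. c * v x) \<in> V"
  using assms unfolding VE_space_def by (elim conjE; blast)+

lemma interp_error_mem_VE:
  assumes VE: "VE_space T E V" and v: "v \<in> V" and nc: "\<not> collinear (verts E)"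
  shows "(\<lambda>y. v y - interp E v y) \<in> V" "\<forall>x\<in>verts E. v x - interp E v x = 0"
proof -
  obtain F where F: "affine_fun F" "\<forall>x\<in>verts E. F x = v x" "interp E v = restr E F"
    using interp_eq_restr_affine[OF nc] .
  have "restr E F \<in> V" using F(1) VE_space_closed(1)[OF VE] unfolding P1_def by blast
  then have "(\<lambda>x. v x + (- 1) * restr E F x) \<in> V"
    using VE_space_closed(2,3)[OF VE] v by blast
  then show "(\<lambda>y. v y - interp E v y) \<in> V" using F(3) by simp
  show "\<forall>x\<in>verts E. v x - interp E v x = 0"
    using F(2,3) vertex_mem_tri_hull unfolding restr_def by simp
qed

section \<open>Counting hanging nodes\<close>

fun midpoints_upto :: "point set \<Rightarrow> nat \<Rightarrow> point set" where
  "midpoints_upto V 0 = V"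
| "midpoints_upto V (Suc k) = V \<union> (\<lambda>(u, v). midpoint u v) ` (midpoints_upto V k \<times> midpoints_upto V k)"

fun midpoints_bound :: "nat \<Rightarrow> nat" where
  "midpoints_bound 0 = 3"
| "midpoints_bound (Suc k) = 3 + midpoints_bound k * midpoints_bound k"

lemma midpoints_bound_pos: "0 < midpoints_bound k"
  by (cases k) simp_all

lemma subset_midpoints_upto: "V \<subseteq> midpoints_upto V k"
  by (cases k) auto

lemma card_midpoints_upto:
  assumes "finite V" "card V \<le> 3"
  shows "finite (midpoints_upto V k)" "card (midpoints_upto V k) \<le> midpoints_bound k"
proof (induction k)
  case (Suc k)
  let ?M = "midpoints_upto V k"
  show "finite (midpoints_upto V (Suc k))" using Suc.IH(1) assms(1) by simp
  have "card (midpoints_upto V (Suc k)) \<le> card V + card ((\<lambda>(u, v). midpoint u v) ` (?M \<times> ?M))"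
    by (simp add: card_Un_le)
  also have "\<dots> \<le> card V + card ?M * card ?M"
    using card_image_le[OF finite_cartesian_product[OF Suc.IH(1) Suc.IH(1)]]
    by (simp add: card_cartesian_product)
  also have "\<dots> \<le> midpoints_bound (Suc k)"
    using assms(2) Suc.IH(2) by (simp add: add_mono mult_le_mono)
  finally show "card (midpoints_upto V (Suc k)) \<le> midpoints_bound (Suc k)" .
qed (use assms in simp_all)

lemma hanging_nodes_subset_midpoints_upto:
  assumes I: "nvb_invariant T par" and E: "E \<in> T"
  shows "idx_le T par k z \<Longrightarrow> z \<in> elem_nodes T E \<Longrightarrow> z \<in> midpoints_upto (verts E) k"
proof (induction rule: idx_le.induct)
  case (proper z k)
  then have "z \<in> verts E" using elem_node_mem_tri_hull E unfolding proper_node_def by blast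
  then show ?case using subset_midpoints_upto by blast
next
  case (hanging z z' z'' k)
  show ?case
  proof (cases "z \<in> verts E")
    case False
    then have "z \<in> hang_nodes T E" using hanging.prems unfolding hang_nodes_def by blast
    then obtain u v where uv: "par z = Some (u, v)" "u \<in> elem_nodes T E" "v \<in> elem_nodes T E"
        "z = midpoint u v"
      by (rule hanging_node_parents[OF I E])
    then have "u = z'" "v = z''" using hanging.hyps(2) by simp_all
    then have "(z', z'') \<in> midpoints_upto (verts E) k \<times> midpoints_upto (verts E) k"
      using hanging.IH uv(2,3) by simp
    then have "midpoint z' z'' \<in> (\<lambda>(u, v). midpoint u v) ` (midpoints_upto (verts E) k \<times> midpoints_upto (verts E) k)"
      by (rule rev_image_eqI) simp
    then show ?thesis using uv(4) \<open>u = z'\<close> \<open>v = z''\<close> by simp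
  qed (use subset_midpoints_upto in blast)
qed

lemma card_hang_nodes_le:
  assumes I: "nvb_invariant T par" and E: "E \<in> T" and A: "admissible \<Lambda> T par"
  shows "finite (hang_nodes T E)" "card (hang_nodes T E) \<le> midpoints_bound \<Lambda>"
proof -
  have "hang_nodes T E \<subseteq> midpoints_upto (verts E) \<Lambda>"
    using A hanging_nodes_subset_midpoints_upto[OF I E]
    unfolding admissible_def hang_nodes_def elem_nodes_def by blast
  moreover have "finite (verts E)" "card (verts E) \<le> 3"
    by (auto simp: verts_def card_insert_if split: prod.splits)
  then have "finite (midpoints_upto (verts E) \<Lambda>)"
    "card (midpoints_upto (verts E) \<Lambda>) \<le> midpoints_bound \<Lambda>"
    by (rule card_midpoints_upto)+
  ultimately show "finite (hang_nodes T E)" "card (hang_nodes T E) \<le> midpoints_bound \<Lambda>"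
    using card_mono[of "midpoints_upto (verts E) \<Lambda>" "hang_nodes T E"] finite_subset by fastforce+
qed


section \<open>Equivalence of the seminorm and the hierarchical details\<close>

lemma sq_le_stab_form:
  assumes "finite (elem_nodes T E)" and "x \<in> elem_nodes T E"
  shows "(w x)^2 \<le> stab_form T E w w"
  unfolding stab_form_def power2_eq_square using assms by (intro member_le_sum) auto

lemma stab_form_eq_sum_hang_nodes:
  assumes "finite (elem_nodes T E)" and "\<forall>x\<in>verts E. w x = 0"
  shows "stab_form T E w w = (\<Sum>x\<in>hang_nodes T E. (w x)^2)"
  unfolding stab_form_def hang_nodes_def power2_eq_square
  using assms by (intro sum.mono_neutral_right) auto

lemma sum3_squared_le: "((a::real) + b + c)^2 \<le> 3 * (a^2 + b^2 + c^2)"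
proof -
  have "3 * (a^2 + b^2 + c^2) - (a + b + c)^2 = (a - b)^2 + (b - c)^2 + (a - c)^2"
    by (simp add: power2_eq_square algebra_simps)
  moreover have "0 \<le> (a - b)^2 + (b - c)^2 + (a - c)^2" by simp
  ultimately show ?thesis by linarith
qed

lemma detail_sq_le_stab_form:
  assumes I: "nvb_invariant T par" and E: "E \<in> T" and z: "z \<in> hang_nodes T E"
  shows "(detail par E w z)^2 \<le> 5 * stab_form T E w w"
proof -
  define S where "S = stab_form T E w w"
  have fin: "finite (elem_nodes T E)"
    using nvb_invariant_finite_nodes[OF I] unfolding elem_nodes_def by simp
  obtain u u' where uu: "u \<in> elem_nodes T E" "u' \<in> elem_nodes T E"
      "detail par E w z = w z - (w u + w u') / 2"
    using detail_hanging_node[OF I E z, of w] by blast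
  then have d: "detail par E w z = w z + (- w u / 2) + (- w u' / 2)"
    by (simp add: diff_divide_distrib add_divide_distrib)
  have "z \<in> elem_nodes T E" using z unfolding hang_nodes_def by blast
  then have "(w z)^2 \<le> S" "(w u)^2 \<le> S" "(w u')^2 \<le> S" using sq_le_stab_form[OF fin] uu unfolding S_def by auto
  have "(detail par E w z)^2 \<le> 3 * ((w z)^2 + (- w u / 2)^2 + (- w u' / 2)^2)"
    unfolding d by (rule sum3_squared_le)
  also have "\<dots> = 3 * ((w z)^2 + (w u)^2 / 4 + (w u')^2 / 4)" by (simp add: power_divide)
  also have "\<dots> \<le> 3 * (S + S / 4 + S / 4)"
    using \<open>(w z)^2 \<le> S\<close> \<open>(w u)^2 \<le> S\<close> \<open>(w u')^2 \<le> S\<close>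
    by (intro mult_left_mono add_mono divide_right_mono) auto
  also have "\<dots> \<le> 5 * S"
    using order_trans[OF zero_le_power2 \<open>(w z)^2 \<le> S\<close>] by (simp add: field_simps)
  finally show ?thesis unfolding S_def .
qed

text \<open>Induction on the global index: the value at a hanging node is its detail plus the mean of
  the values at its parents, and the values vanish at the vertices.\<close>

lemma abs_le_index_mult_detail_bound:
  assumes I: "nvb_invariant T par" and E: "E \<in> T" and w0: "\<forall>x\<in>verts E. w x = 0"
    and M: "0 \<le> M" "\<forall>z\<in>hang_nodes T E. \<bar>detail par E w z\<bar> \<le> M"
  shows "idx_le T par k z \<Longrightarrow> z \<in> elem_nodes T E \<Longrightarrow> \<bar>w z\<bar> \<le> real k * M"
proof (induction rule: idx_le.induct)
  case (proper z k)
  then have "z \<in> verts E" using elem_node_mem_tri_hull E unfolding proper_node_def by blast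
  then show ?case using w0 M(1) by simp
next
  case (hanging z z' z'' k)
  show ?case
  proof (cases "z \<in> verts E")
    case False
    then have zH: "z \<in> hang_nodes T E" using hanging.prems unfolding hang_nodes_def by blast
    then obtain u u' where uu: "par z = Some (u, u')" "u \<in> elem_nodes T E" "u' \<in> elem_nodes T E"
        "detail par E w z = w z - (w u + w u') / 2"
      by (rule detail_hanging_node[OF I E])
    then have "u = z'" "u' = z''" using hanging.hyps(2) by simp_all
    then have "\<bar>w z'\<bar> \<le> real k * M" "\<bar>w z''\<bar> \<le> real k * M" using hanging.IH uu(2,3) by simp_all
    moreover have "\<bar>detail par E w z\<bar> \<le> M" using M(2) zH by blast
    moreover have "w z = detail par E w z + w z' / 2 + w z'' / 2"
      using uu(4) \<open>u = z'\<close> \<open>u' = z''\<close> by (simp add: field_simps)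
    moreover have "real (Suc k) * M = M + real k * M" by (simp add: algebra_simps)
    ultimately show ?thesis unfolding abs_le_iff by linarith
  qed (use w0 M(1) in simp)
qed

lemma stab_form_le_sum_detail_sq:
  assumes I: "nvb_invariant T par" and E: "E \<in> T" and A: "admissible \<Lambda> T par"
    and w0: "\<forall>x\<in>verts E. w x = 0"
  shows "stab_form T E w w \<le> card (hang_nodes T E) * ((real \<Lambda>)^2 * (\<Sum>x\<in>hang_nodes T E. (detail par E w x)^2))"
proof -
  define D where "D = (\<Sum>x\<in>hang_nodes T E. (detail par E w x)^2)"
  have fin: "finite (elem_nodes T E)"
    using nvb_invariant_finite_nodes[OF I] unfolding elem_nodes_def by simp
  have "\<bar>detail par E w z\<bar> \<le> sqrt D" if "z \<in> hang_nodes T E" for z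
  proof -
    have "(detail par E w z)^2 \<le> D"
      unfolding D_def using card_hang_nodes_le(1)[OF I E A] that by (intro member_le_sum) auto
    then show ?thesis using real_sqrt_le_mono by fastforce
  qed
  then have "\<bar>w z\<bar> \<le> real \<Lambda> * sqrt D" if "z \<in> hang_nodes T E" for z
    using abs_le_index_mult_detail_bound[OF I E w0, of "sqrt D" \<Lambda> z] A that
    unfolding admissible_def hang_nodes_def elem_nodes_def by (simp add: D_def sum_nonneg)
  then have "(w z)^2 \<le> (real \<Lambda>)^2 * D" if "z \<in> hang_nodes T E" for z
    using that power_mono[of "\<bar>w z\<bar>" "real \<Lambda> * sqrt D" 2]
    by (simp add: power_mult_distrib D_def sum_nonneg)
  then have "(\<Sum>x\<in>hang_nodes T E. (w x)^2) \<le> card (hang_nodes T E) * ((real \<Lambda>)^2 * D)"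
    by (rule sum_bounded_above)
  then show ?thesis unfolding D_def stab_form_eq_sum_hang_nodes[OF fin w0] .
qed

theorem hierarchical_details_equivalence:
  fixes cs Cs :: real
  assumes cs: "0 < cs" and I: "nvb_invariant T par" and A: "admissible \<Lambda> T par" and E: "E \<in> T"
    and VE: "VE_space T E V" and stab: "stability_assm cs Cs T E V" and v: "v \<in> V"
  shows "(\<Sum>x\<in>hang_nodes T E. (detail par E v x)^2)
           \<le> 5 * real (midpoints_bound \<Lambda>) * Cs * h1_semi_sq E (\<lambda>y. v y - interp E v y)"
    and "h1_semi_sq E (\<lambda>y. v y - interp E v y)
           \<le> real (midpoints_bound \<Lambda>) * (real \<Lambda>)^2 / cs * (\<Sum>x\<in>hang_nodes T E. (detail par E v x)^2)"
proof -
  define w where "w = (\<lambda>y. v y - interp E v y)"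
  define G where "G = real (midpoints_bound \<Lambda>)"
  define D where "D = (\<Sum>x\<in>hang_nodes T E. (detail par E w x)^2)"
  have w: "w \<in> V" "\<forall>x\<in>verts E. w x = 0"
    using interp_error_mem_VE[OF VE v nvb_invariant_noncollinear[OF I E]] unfolding w_def by auto
  then have cs_le: "cs * h1_semi_sq E w \<le> stab_form T E w w"
    and le_Cs: "stab_form T E w w \<le> Cs * h1_semi_sq E w"
    using stab unfolding stability_assm_def by blast+
  have detail_eq: "(\<Sum>x\<in>hang_nodes T E. (detail par E v x)^2) = D"
    unfolding D_def w_def using detail_interp_error[OF I E] by simp
  have card_le: "real (card (hang_nodes T E)) \<le> G"
    using card_hang_nodes_le(2)[OF I E A] unfolding G_def by simp
  have nonneg: "0 \<le> stab_form T E w w" "0 \<le> D"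
    unfolding D_def stab_form_def by (simp_all add: sum_nonneg)
  have "D \<le> card (hang_nodes T E) * (5 * stab_form T E w w)"
    unfolding D_def using detail_sq_le_stab_form[OF I E] by (rule sum_bounded_above)
  also have "\<dots> \<le> G * (5 * (Cs * h1_semi_sq E w))"
    using card_le nonneg le_Cs by (intro mult_mono) auto
  finally show "(\<Sum>x\<in>hang_nodes T E. (detail par E v x)^2)
      \<le> 5 * G * Cs * h1_semi_sq E (\<lambda>y. v y - interp E v y)"
    unfolding detail_eq w_def G_def by (simp add: algebra_simps)
  have "cs * h1_semi_sq E w \<le> card (hang_nodes T E) * ((real \<Lambda>)^2 * D)"
    using cs_le stab_form_le_sum_detail_sq[OF I E A w(2)] unfolding D_def by linarith
  also have "\<dots> \<le> G * ((real \<Lambda>)^2 * D)" using card_le nonneg by (intro mult_right_mono) auto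
  finally show "h1_semi_sq E (\<lambda>y. v y - interp E v y)
      \<le> G * (real \<Lambda>)^2 / cs * (\<Sum>x\<in>hang_nodes T E. (detail par E v x)^2)"
    using cs unfolding detail_eq w_def G_def by (simp add: field_simps)
qed

theorem lemma7p1:
  fixes T0 :: "tri set" and \<Lambda> :: nat and cs Cs :: real
  assumes "initial_triangulation T0" and "0 < cs" and "0 < Cs"
  shows "\<exists>C1>0. \<exists>C2>0. \<forall>T par E V v.
     nvb_reach T0 T par \<and> admissible \<Lambda> T par \<and> E \<in> T \<and>
     VE_space T E V \<and> stability_assm cs Cs T E V \<and> v \<in> V \<longrightarrow>
       (\<Sum>x\<in>hang_nodes T E. (detail par E v x)^2)
           \<le> C1 * h1_semi_sq E (\<lambda>y. v y - interp E v y) \<and>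
       h1_semi_sq E (\<lambda>y. v y - interp E v y)
           \<le> C2 * (\<Sum>x\<in>hang_nodes T E. (detail par E v x)^2)"
proof -
  define G where "G = real (midpoints_bound \<Lambda>)"
  have C1: "0 < 5 * G * Cs" using assms(3) midpoints_bound_pos unfolding G_def by simp
  have C2: "0 < G * (real \<Lambda>)^2 / cs + 1" using assms(2) unfolding G_def by (simp add: add_nonneg_pos)
  have "(\<Sum>x\<in>hang_nodes T E. (detail par E v x)^2)
        \<le> 5 * G * Cs * h1_semi_sq E (\<lambda>y. v y - interp E v y) \<and>
      h1_semi_sq E (\<lambda>y. v y - interp E v y)
        \<le> (G * (real \<Lambda>)^2 / cs + 1) * (\<Sum>x\<in>hang_nodes T E. (detail par E v x)^2)"
    if "nvb_reach T0 T par" "admissible \<Lambda> T par" "E \<in> T" "VE_space T E V"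
      "stability_assm cs Cs T E V" "v \<in> V" for T par E V v
  proof -
    note bounds = hierarchical_details_equivalence[OF assms(2) nvb_reach_invariant[OF that(1) assms(1)] that(2-6)]
    have "0 \<le> (\<Sum>x\<in>hang_nodes T E. (detail par E v x)^2)" by (simp add: sum_nonneg)
    then show ?thesis using bounds unfolding G_def by (simp add: distrib_right)
  qed
  then show ?thesis using C1 C2 by blast
qed

end
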